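(* Let $(\Omega,\mathcal{F},\mathbb{P})$ be a complete probability space, $t_0<T$, $x_0$ a random variable and $a$ a stochastic process on $[t_0,T]$, and let $x(t,\omega)=x_0(\omega)\mathrm{e}^{\int_{t_0}^t a(s,\omega)\mathrm{d} s}$. Assume: (H1) $a\in \mathrm{L}^2([t_0,T]\times\Omega)$; (H2) for every $N\ge2$, $x_0$, $\xi_1$ and $(\xi_2,\ldots,\xi_N)$ are absolutely continuous and independent; (H3) the density $f_{\xi_1}$ of $\xi_1$ is continuous and bounded on $\mathbb{R}$; (H4) $\int_{t_0}^t\phi_1(s)\,\mathrm{d} s\ne0$ for all $t\in(t_0,T]$; (H5) either $x_0>0$ a.s. or $x_0<0$ a.s. Then for each fixed $t\in(t_0,T]$ and $x\ne0$, the sequence \[ f_1^N(x,t)=\int_{\mathbb{R}^N} f_0\big(x\,\mathrm{e}^{-K_a(t,\pmb{\xi}_N)}\big)f_{\pmb{\xi}_N}(\pmb{\xi}_N)\,\mathrm{e}^{-K_a(t,\pmb{\xi}_N)}\,\mathrm{d}\pmb{\xi}_N \] (where $f_0$ is the density of $x_0$) converges to $f_1(x,t)$, where $f_1(\cdot,t)$ is a probability density of $x(t,\cdot)$.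
   Context: Karhunen–Loève expansion: for $a\in \mathrm{L}^2([t_0,T]\times\Omega)$ write $a(t,\omega)=\mu_a(t)+\sum_{j=1}^\infty\sqrt{\nu_j}\,\phi_j(t)\xi_j(\omega)$ (convergence in $\mathrm{L}^2([t_0,T]\times\Omega)$), where $\mu_a(t)=\mathbb{E}[a(t)]$, $\{(\nu_j,\phi_j)\}$ are the (nonnegative) eigenvalue/eigenfunction pairs of the covariance operator $\mathcal{C}f(t)=\int_{t_0}^T\mathrm{Cov}[a(t),a(s)]f(s)\,\mathrm{d} s$ on $\mathrm{L}^2([t_0,T])$ with $\{\phi_j\}$ an orthonormal basis, and $\xi_j$ are zero-mean, unit-variance, pairwise uncorrelated random variables; pairs may be enumerated in any order (here $\nu_1>0$). $\pmb{\xi}_N=(\xi_1,\ldots,\xi_N)$, $f_{\pmb{\xi}_N}$ its density, $K_a(t,\pmb{\xi}_N)=\int_{t_0}^t\big(\mu_a(s)+\sum_{j=1}^N\sqrt{\nu_j}\phi_j(s)\xi_j\big)\mathrm{d} s$. *)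

theory Defs
  imports "HOL-Probability.Probability"
begin

definition mean_proc :: "'a measure \<Rightarrow> (real \<Rightarrow> 'a \<Rightarrow> real) \<Rightarrow> real \<Rightarrow> real" where
  "mean_proc M a t = integral\<^sup>L M (a t)"

definition cov_proc :: "'a measure \<Rightarrow> (real \<Rightarrow> 'a \<Rightarrow> real) \<Rightarrow> real \<Rightarrow> real \<Rightarrow> real" where
  "cov_proc M a t s =
     integral\<^sup>L M (\<lambda>\<omega>. (a t \<omega> - mean_proc M a t) * (a s \<omega> - mean_proc M a s))"

definition L2_process :: "'a measure \<Rightarrow> real \<Rightarrow> real \<Rightarrow> (real \<Rightarrow> 'a \<Rightarrow> real) \<Rightarrow> bool" where
  "L2_process M t0 T a \<longleftrightarrow>
     (\<lambda>(t,\<omega>). a t \<omega>) \<in> borel_measurable (restrict_space lborel {t0..T} \<Otimes>\<^sub>M M) \<and>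
     integrable (restrict_space lborel {t0..T} \<Otimes>\<^sub>M M) (\<lambda>(t,\<omega>). (a t \<omega>)\<^sup>2)"

definition KL_expansion ::
  "'a measure \<Rightarrow> real \<Rightarrow> real \<Rightarrow> (real \<Rightarrow> 'a \<Rightarrow> real) \<Rightarrow> (nat \<Rightarrow> real)
    \<Rightarrow> (nat \<Rightarrow> real \<Rightarrow> real) \<Rightarrow> (nat \<Rightarrow> 'a \<Rightarrow> real) \<Rightarrow> bool" where
  "KL_expansion M t0 T a \<nu> \<phi> \<xi> \<longleftrightarrow>
     \<comment> \<open>eigenpairs with nonnegative eigenvalues\<close>
     (\<forall>j\<ge>1. 0 \<le> \<nu> j \<and>
        (AE t in lborel. t \<in> {t0..T} \<longrightarrow>
           (LINT s:{t0..T}|lborel. cov_proc M a t s * \<phi> j s) = \<nu> j * \<phi> j t)) \<and>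
     \<comment> \<open>orthonormal\<close>
     (\<forall>j\<ge>1. \<phi> j \<in> borel_measurable lborel \<and> set_integrable lborel {t0..T} (\<lambda>s. (\<phi> j s)\<^sup>2)) \<and>
     (\<forall>i\<ge>1. \<forall>j\<ge>1. (LINT s:{t0..T}|lborel. \<phi> i s * \<phi> j s) = (if i = j then 1 else 0)) \<and>
     \<comment> \<open>complete (basis of L^2([t0,T]))\<close>
     (\<forall>f. f \<in> borel_measurable lborel \<and> set_integrable lborel {t0..T} (\<lambda>s. (f s)\<^sup>2) \<and>
          (\<forall>j\<ge>1. (LINT s:{t0..T}|lborel. f s * \<phi> j s) = 0)
          \<longrightarrow> (AE s in lborel. s \<in> {t0..T} \<longrightarrow> f s = 0)) \<and>
     \<comment> \<open>the random coefficients\<close>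
     (\<forall>j\<ge>1. \<xi> j \<in> borel_measurable M \<and> integrable M (\<lambda>\<omega>. (\<xi> j \<omega>)\<^sup>2) \<and>
        integral\<^sup>L M (\<xi> j) = 0 \<and> integral\<^sup>L M (\<lambda>\<omega>. (\<xi> j \<omega>)\<^sup>2) = 1) \<and>
     (\<forall>i\<ge>1. \<forall>j\<ge>1. i \<noteq> j \<longrightarrow> integral\<^sup>L M (\<lambda>\<omega>. \<xi> i \<omega> * \<xi> j \<omega>) = 0) \<and>
     \<comment> \<open>convergence in L^2([t0,T] x Omega)\<close>
     ((\<lambda>N. integral\<^sup>L (restrict_space lborel {t0..T} \<Otimes>\<^sub>M M)
          (\<lambda>(t,\<omega>). (a t \<omega> - mean_proc M a t
                      - (\<Sum>j\<in>{1..N}. sqrt (\<nu> j) * \<phi> j t * \<xi> j \<omega>))\<^sup>2)) \<longlonglongrightarrow> 0)"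

definition xi_vec :: "(nat \<Rightarrow> 'a \<Rightarrow> real) \<Rightarrow> nat \<Rightarrow> 'a \<Rightarrow> nat \<Rightarrow> real" where
  "xi_vec \<xi> N \<omega> = restrict (\<lambda>j. \<xi> j \<omega>) {1..N}"

definition K_a :: "'a measure \<Rightarrow> (real \<Rightarrow> 'a \<Rightarrow> real) \<Rightarrow> (nat \<Rightarrow> real) \<Rightarrow> (nat \<Rightarrow> real \<Rightarrow> real)
                   \<Rightarrow> real \<Rightarrow> nat \<Rightarrow> real \<Rightarrow> (nat \<Rightarrow> real) \<Rightarrow> real" where
  "K_a M a \<nu> \<phi> t0 N t y =
     (LINT s:{t0..t}|lborel. mean_proc M a s + (\<Sum>j\<in>{1..N}. sqrt (\<nu> j) * \<phi> j s * y j))"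

definition (in prob_space) indep3 ::
  "'b measure \<Rightarrow> ('a \<Rightarrow> 'b) \<Rightarrow> 'c measure \<Rightarrow> ('a \<Rightarrow> 'c) \<Rightarrow> 'd measure \<Rightarrow> ('a \<Rightarrow> 'd) \<Rightarrow> bool" where
  "indep3 M1 X M2 Y M3 Z \<longleftrightarrow>
     X \<in> measurable M M1 \<and> Y \<in> measurable M M2 \<and> Z \<in> measurable M M3 \<and>
     (\<forall>A\<in>sets M1. \<forall>B\<in>sets M2. \<forall>C\<in>sets M3.
        prob (X -` A \<inter> Y -` B \<inter> Z -` C \<inter> space M) =
        prob (X -` A \<inter> space M) * prob (Y -` B \<inter> space M) * prob (Z -` C \<inter> space M))"

definition f1N :: "'a measure \<Rightarrow> (real \<Rightarrow> 'a \<Rightarrow> real) \<Rightarrow> (nat \<Rightarrow> real) \<Rightarrow> (nat \<Rightarrow> real \<Rightarrow> real)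
                  \<Rightarrow> real \<Rightarrow> (real \<Rightarrow> real) \<Rightarrow> (nat \<Rightarrow> (nat \<Rightarrow> real) \<Rightarrow> real)
                  \<Rightarrow> nat \<Rightarrow> real \<Rightarrow> real \<Rightarrow> real" where
  "f1N M a \<nu> \<phi> t0 f0 fxi N x t =
     integral\<^sup>L (PiM {1..N} (\<lambda>_. lborel))
       (\<lambda>y. f0 (x * exp (- K_a M a \<nu> \<phi> t0 N t y)) * fxi N y * exp (- K_a M a \<nu> \<phi> t0 N t y))"

end

theory Submission
  imports Defs
begin

text \<open>Since \<open>K_a(t, \<cdot>)\<close> is affine, \<open>x0 * exp (K_a(t, \<xi>\<^sub>N))\<close> splits as
  \<open>x0 * exp (c * \<xi>\<^sub>1 + V\<^sub>N)\<close> with \<open>c \<noteq> 0\<close> by (H4) and \<open>V\<^sub>N\<close> a function of \<open>(\<xi>\<^sub>2, \<dots>, \<xi>\<^sub>N)\<close>,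
  independent of \<open>x0\<close> and \<open>\<xi>\<^sub>1\<close>. Substituting for \<open>\<xi>\<^sub>1\<close> shows that \<open>f\<^sub>1\<^sup>N(\<cdot>, t)\<close> is a density of this
  variable, namely the average over \<open>(x0, V\<^sub>N)\<close> of the density of \<open>z * exp (c * \<xi>\<^sub>1 + v)\<close>; the same
  average with \<open>V\<^sub>N\<close> replaced by \<open>\<integral>\<^sub>t\<^sub>0\<^sup>t a - c * \<xi>\<^sub>1\<close> defines \<open>f\<^sub>1\<close>. The \<open>L\<^sup>2\<close> convergence of the
  Karhunen-Loeve expansion gives \<open>K_a(t, \<xi>\<^sub>N) \<rightarrow> \<integral>\<^sub>t\<^sub>0\<^sup>t a\<close> in \<open>L\<^sup>1\<close>, and as \<open>f\<^sub>\<xi>\<^sub>1\<close> is bounded and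
  continuous this yields \<open>f\<^sub>1\<^sup>N \<rightarrow> f\<^sub>1\<close> pointwise. Testing against continuous cutoffs supported away
  from \<open>0\<close> finally identifies \<open>f\<^sub>1\<close> as a density of \<open>x(t)\<close>.\<close>

section \<open>Changes of variables\<close>

lemma nn_integral_indicator_incseq_tendsto:
  fixes f :: "'a \<Rightarrow> ennreal"
  assumes [measurable]: "f \<in> borel_measurable M" and A: "range A \<subseteq> sets M" "incseq A"
  shows "(\<lambda>n. \<integral>\<^sup>+x. f x * indicator (A n) x \<partial>M) \<longlonglongrightarrow> (\<integral>\<^sup>+x. f x * indicator (\<Union>n. A n) x \<partial>M)"
proof -
  have "(\<lambda>n. emeasure (density M f) (A n)) \<longlonglongrightarrow> emeasure (density M f) (\<Union>n. A n)"
    using A by (intro Lim_emeasure_incseq) auto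
  moreover have "(\<Union>n. A n) \<in> sets M" using A by auto
  ultimately show ?thesis
    using A by (simp add: emeasure_density subset_eq del: SUP_apply)
qed

lemma nn_integral_exp_substitution_interval:
  fixes H :: "real \<Rightarrow> ennreal"
  assumes [measurable]: "H \<in> borel_measurable borel" and "a < b"
  shows "(\<integral>\<^sup>+w. H w * ennreal (1 / w) * indicator {exp a..exp b} w \<partial>lborel)
       = (\<integral>\<^sup>+k. H (exp k) * indicator {a..b} k \<partial>lborel)"
proof -
  have "(\<integral>\<^sup>+w. H w * ennreal (1 / w) * indicator {exp a..exp b} w \<partial>lborel)
      = (\<integral>\<^sup>+k. H (exp k) * ennreal (1 / exp k) * exp k * indicator {a..b} k \<partial>lborel)"
    using \<open>a < b\<close> by (intro nn_integral_substitution_aux) (auto intro!: derivative_eq_intros continuous_intros)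
  also have "\<dots> = (\<integral>\<^sup>+k. H (exp k) * indicator {a..b} k \<partial>lborel)"
  proof (rule nn_integral_cong)
    fix k :: real
    have "ennreal (1 / exp k) * ennreal (exp k) = 1"
      by (simp add: ennreal_mult'[symmetric])
    then show "H (exp k) * ennreal (1 / exp k) * ennreal (exp k) * indicator {a..b} k = H (exp k) * indicator {a..b} k"
      by (simp add: mult.assoc)
  qed
  finally show ?thesis .
qed

lemma nn_integral_exp_substitution:
  fixes H :: "real \<Rightarrow> ennreal"
  assumes [measurable]: "H \<in> borel_measurable borel"
  shows "(\<integral>\<^sup>+k. H (exp k) \<partial>lborel) = (\<integral>\<^sup>+w. H w * ennreal (1 / w) \<partial>lborel)"
proof -
  let ?f = "\<lambda>w. H w * ennreal (1 / w)"
  define I where "I n = {- real (Suc n)..real (Suc n)}" for n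
  define J where "J n = {exp (- real (Suc n))..exp (real (Suc n))}" for n
  have substitution: "(\<integral>\<^sup>+w. ?f w * indicator (J n) w \<partial>lborel) = (\<integral>\<^sup>+k. H (exp k) * indicator (I n) k \<partial>lborel)" for n
    unfolding I_def J_def by (rule nn_integral_exp_substitution_interval) auto
  have "(\<Union>n. I n) = UNIV"
  proof -
    have "k \<in> I (nat \<lceil>\<bar>k\<bar>\<rceil>)" for k unfolding I_def by auto linarith+
    then show ?thesis by blast
  qed
  moreover have "(\<lambda>n. \<integral>\<^sup>+k. H (exp k) * indicator (I n) k \<partial>lborel)
      \<longlonglongrightarrow> (\<integral>\<^sup>+k. H (exp k) * indicator (\<Union>n. I n) k \<partial>lborel)"
    by (rule nn_integral_indicator_incseq_tendsto) (auto simp: I_def incseq_def)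
  ultimately have lim_I: "(\<lambda>n. \<integral>\<^sup>+k. H (exp k) * indicator (I n) k \<partial>lborel) \<longlonglongrightarrow> (\<integral>\<^sup>+k. H (exp k) \<partial>lborel)"
    by simp
  have "(\<Union>n. J n) = {0<..}"
  proof -
    have "w \<in> J (nat \<lceil>\<bar>ln w\<bar>\<rceil>)" if "0 < w" for w
    proof -
      have "exp (- real (Suc (nat \<lceil>\<bar>ln w\<bar>\<rceil>))) \<le> exp (ln w)" "exp (ln w) \<le> exp (real (Suc (nat \<lceil>\<bar>ln w\<bar>\<rceil>)))"
        unfolding exp_le_cancel_iff by linarith+
      then show ?thesis unfolding J_def using that by simp
    qed
    moreover have "J n \<subseteq> {0<..}" for n
      unfolding J_def by (auto intro: less_le_trans[OF exp_gt_zero])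
    ultimately show ?thesis by blast
  qed
  moreover have "(\<lambda>n. \<integral>\<^sup>+w. ?f w * indicator (J n) w \<partial>lborel) \<longlonglongrightarrow> (\<integral>\<^sup>+w. ?f w * indicator (\<Union>n. J n) w \<partial>lborel)"
    by (rule nn_integral_indicator_incseq_tendsto) (auto simp: J_def incseq_def)
  moreover have "?f w * indicator {0<..} w = ?f w" for w
    by (cases "0 < w") (auto simp: ennreal_neg)
  ultimately have "(\<lambda>n. \<integral>\<^sup>+k. H (exp k) * indicator (I n) k \<partial>lborel) \<longlonglongrightarrow> (\<integral>\<^sup>+w. ?f w \<partial>lborel)"
    by (simp add: substitution)
  with lim_I show ?thesis by (rule LIMSEQ_unique)
qed

text \<open>If \<open>U\<close> has density \<open>f\<close>, then \<open>exp_affine_density f p c v\<close> is a density of \<open>p * exp (c * U + v)\<close>.\<close>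
definition exp_affine_density :: "(real \<Rightarrow> real) \<Rightarrow> real \<Rightarrow> real \<Rightarrow> real \<Rightarrow> real \<Rightarrow> real" where
  "exp_affine_density f p c v w = (if 0 < w / p then f ((ln (w / p) - v) / c) / (\<bar>c\<bar> * \<bar>w\<bar>) else 0)"

lemma exp_affine_density_nonneg: "(\<And>u. 0 \<le> f u) \<Longrightarrow> 0 \<le> exp_affine_density f p c v w"
  unfolding exp_affine_density_def by simp

lemma exp_affine_density_le:
  assumes "\<And>u. 0 \<le> f u" "\<And>u. f u \<le> B"
  shows "exp_affine_density f p c v w \<le> B / (\<bar>c\<bar> * \<bar>w\<bar>)"
  using assms order.trans[OF assms(1,2)]
  unfolding exp_affine_density_def by (auto intro: divide_right_mono)

lemma continuous_on_exp_affine_density: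
  assumes "continuous_on UNIV f" "c \<noteq> 0"
  shows "continuous_on UNIV (\<lambda>v. exp_affine_density f p c v w)"
  unfolding exp_affine_density_def using assms
  by (cases "0 < w / p") (auto intro!: continuous_on_compose2[OF assms(1)] continuous_intros)

lemma borel_measurable_exp_affine_density[measurable (raw)]:
  assumes [measurable]: "f \<in> borel_measurable borel" "p \<in> borel_measurable K" "c \<in> borel_measurable K"
    "v \<in> borel_measurable K" "w \<in> borel_measurable K"
  shows "(\<lambda>x. exp_affine_density f (p x) (c x) (v x) (w x)) \<in> borel_measurable K"
  unfolding exp_affine_density_def by measurable

lemma nn_integral_exp_affine_density:
  fixes h :: "real \<Rightarrow> ennreal" and f :: "real \<Rightarrow> real"
  assumes [measurable]: "h \<in> borel_measurable borel" "f \<in> borel_measurable borel"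
    and f_nonneg: "\<And>u. 0 \<le> f u" and p: "p \<noteq> 0" and c: "c \<noteq> 0"
  shows "(\<integral>\<^sup>+u. h (p * exp (c * u + v)) * ennreal (f u) \<partial>lborel) =
         (\<integral>\<^sup>+w. h w * ennreal (exp_affine_density f p c v w) \<partial>lborel)"
proof -
  define G where "G k = h (p * exp k) * ennreal (f ((k - v) / c))" for k
  define H where "H y = h (p * y) * ennreal (f ((ln y - v) / c))" for y
  define F where "F w = h w * ennreal (f ((ln (w / p) - v) / c)) * ennreal (1 / (w / p))" for w
  have [measurable]: "G \<in> borel_measurable borel" "H \<in> borel_measurable borel" "F \<in> borel_measurable borel"
    unfolding G_def H_def F_def by measurable
  have affine: "(\<integral>\<^sup>+k. G k \<partial>lborel) = ennreal \<bar>c\<bar> * (\<integral>\<^sup>+u. h (p * exp (c * u + v)) * ennreal (f u) \<partial>lborel)"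
    using nn_integral_real_affine[of G c v] c unfolding G_def by (simp add: add.commute)
  have exp: "(\<integral>\<^sup>+k. G k \<partial>lborel) = (\<integral>\<^sup>+y. H y * ennreal (1 / y) \<partial>lborel)"
    using nn_integral_exp_substitution[of H] unfolding G_def H_def by simp
  have scale: "(\<integral>\<^sup>+w. F w \<partial>lborel) = ennreal \<bar>p\<bar> * (\<integral>\<^sup>+y. H y * ennreal (1 / y) \<partial>lborel)"
    using nn_integral_real_affine[of F p 0] p unfolding F_def H_def by simp
  have "(\<integral>\<^sup>+u. h (p * exp (c * u + v)) * ennreal (f u) \<partial>lborel)
        = ennreal (1 / \<bar>c\<bar>) * (ennreal (1 / \<bar>p\<bar>) * (\<integral>\<^sup>+w. F w \<partial>lborel))"
  proof -
    have "ennreal (1 / \<bar>c\<bar>) * ennreal \<bar>c\<bar> = 1" "ennreal (1 / \<bar>p\<bar>) * ennreal \<bar>p\<bar> = 1"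
      using c p by (simp_all add: ennreal_mult'[symmetric])
    then show ?thesis unfolding scale exp[symmetric] affine by (simp add: mult.assoc[symmetric])
  qed
  also have "\<dots> = (\<integral>\<^sup>+w. ennreal (1 / \<bar>c\<bar>) * (ennreal (1 / \<bar>p\<bar>) * F w) \<partial>lborel)"
    by (simp add: nn_integral_cmult)
  also have "\<dots> = (\<integral>\<^sup>+w. h w * ennreal (exp_affine_density f p c v w) \<partial>lborel)"
  proof (rule nn_integral_cong)
    fix w :: real
    show "ennreal (1 / \<bar>c\<bar>) * (ennreal (1 / \<bar>p\<bar>) * F w) = h w * ennreal (exp_affine_density f p c v w)"
    proof (cases "0 < w / p")
      case True
      then have "1 / \<bar>c\<bar> * (1 / \<bar>p\<bar>) * (1 / (w / p)) = 1 / (\<bar>c\<bar> * \<bar>w\<bar>)"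
        using p c by (auto simp: field_simps abs_if zero_less_divide_iff split: if_splits)
      then have "ennreal (1 / \<bar>c\<bar>) * ennreal (1 / \<bar>p\<bar>) * ennreal (1 / (w / p)) = ennreal (1 / (\<bar>c\<bar> * \<bar>w\<bar>))"
        using True by (simp add: ennreal_mult'[symmetric])
      moreover have "ennreal (1 / \<bar>c\<bar>) * (ennreal (1 / \<bar>p\<bar>) * F w)
          = h w * (ennreal (f ((ln (w / p) - v) / c)) * (ennreal (1 / \<bar>c\<bar>) * ennreal (1 / \<bar>p\<bar>) * ennreal (1 / (w / p))))"
        unfolding F_def by (simp add: ac_simps)
      ultimately show ?thesis
        using True f_nonneg unfolding exp_affine_density_def by (simp add: ennreal_mult'[symmetric])
    next
      case False
      then have "1 / (w / p) \<le> 0" by (simp add: not_less divide_le_0_iff) linarith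
      then show ?thesis using False unfolding F_def exp_affine_density_def by (simp add: ennreal_neg)
    qed
  qed
  finally show ?thesis .
qed

lemma exp_affine_density_swap:
  assumes x: "x \<noteq> 0" and c: "c \<noteq> 0"
  shows "(w / x) * exp_affine_density f x (- c) (- v) w = exp_affine_density f w c v x"
proof (cases "0 < w / x")
  case True
  then have xw: "0 < x / w" and w: "w \<noteq> 0" by (auto simp: zero_less_divide_iff)
  have arg: "(ln (w / x) - - v) / - c = (ln (x / w) - v) / c"
    using c ln_inverse[of "w / x"] True by (simp add: field_simps)
  have abs_w: "\<bar>w\<bar> = (w / x) * \<bar>x\<bar>"
  proof -
    have "\<bar>w\<bar> = \<bar>w / x\<bar> * \<bar>x\<bar>" using x by (simp add: abs_divide)
    then show ?thesis by (simp only: abs_of_pos[OF True])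
  qed
  have "(w / x) * exp_affine_density f x (- c) (- v) w = (w / x) * (f ((ln (x / w) - v) / c) / (\<bar>c\<bar> * \<bar>w\<bar>))"
    unfolding exp_affine_density_def using True arg by simp
  also have "\<dots> = f ((ln (x / w) - v) / c) / (\<bar>c\<bar> * \<bar>x\<bar>)"
    unfolding abs_w using True x w c by (simp add: field_simps)
  finally show ?thesis unfolding exp_affine_density_def using xw by simp
next
  case False
  then have "\<not> 0 < x / w" by (auto simp: zero_less_divide_iff)
  then show ?thesis using False unfolding exp_affine_density_def by simp
qed

lemma nn_integral_exp_affine_density_swap:
  fixes f g :: "real \<Rightarrow> real"
  assumes [measurable]: "f \<in> borel_measurable borel" "g \<in> borel_measurable borel"
    and f_nonneg: "\<And>u. 0 \<le> f u" and g_nonneg: "\<And>z. 0 \<le> g z" and x: "x \<noteq> 0" and c: "c \<noteq> 0"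
  shows "(\<integral>\<^sup>+u. ennreal (f u) * ennreal (g (x * exp (- (c * u + v))) * exp (- (c * u + v))) \<partial>lborel)
       = (\<integral>\<^sup>+z. ennreal (g z) * ennreal (exp_affine_density f z c v x) \<partial>lborel)"
proof -
  define h where "h w = ennreal (g w * (w / x))" for w
  have [measurable]: "h \<in> borel_measurable borel" unfolding h_def by measurable
  have "(\<integral>\<^sup>+u. ennreal (f u) * ennreal (g (x * exp (- (c * u + v))) * exp (- (c * u + v))) \<partial>lborel)
      = (\<integral>\<^sup>+u. h (x * exp (- c * u + - v)) * ennreal (f u) \<partial>lborel)"
    using x by (intro nn_integral_cong) (simp add: h_def mult.commute)
  also have "\<dots> = (\<integral>\<^sup>+w. h w * ennreal (exp_affine_density f x (- c) (- v) w) \<partial>lborel)"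
    using f_nonneg x c by (intro nn_integral_exp_affine_density) auto
  also have "\<dots> = (\<integral>\<^sup>+z. ennreal (g z) * ennreal (exp_affine_density f z c v x) \<partial>lborel)"
  proof (rule nn_integral_cong)
    fix w :: real
    show "h w * ennreal (exp_affine_density f x (- c) (- v) w) = ennreal (g w) * ennreal (exp_affine_density f w c v x)"
    proof (cases "0 < w / x")
      case True
      then have "0 \<le> g w * (w / x)" using g_nonneg[of w] by (intro mult_nonneg_nonneg) auto
      moreover have "0 \<le> exp_affine_density f x (- c) (- v) w"
        by (rule exp_affine_density_nonneg[OF f_nonneg])
      ultimately have "h w * ennreal (exp_affine_density f x (- c) (- v) w)
          = ennreal (g w * ((w / x) * exp_affine_density f x (- c) (- v) w))"
        unfolding h_def by (simp add: ennreal_mult[symmetric] mult.assoc)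
      then show ?thesis
        unfolding exp_affine_density_swap[OF x c] by (simp add: ennreal_mult'[OF g_nonneg])
    next
      case False
      then show ?thesis using exp_affine_density_swap[OF x c, of w f v]
        unfolding exp_affine_density_def h_def by (auto simp: zero_less_divide_iff)
    qed
  qed
  finally show ?thesis .
qed

section \<open>Convergence of integrals\<close>

lemma LIMSEQ_of_subsubseq:
  fixes a :: "nat \<Rightarrow> 'b :: metric_space"
  assumes "\<And>r::nat\<Rightarrow>nat. strict_mono r \<Longrightarrow> \<exists>s::nat\<Rightarrow>nat. strict_mono s \<and> (\<lambda>n. a (r (s n))) \<longlonglongrightarrow> L"
  shows "a \<longlonglongrightarrow> L"
proof (rule ccontr)
  assume "\<not> a \<longlonglongrightarrow> L"
  then obtain e where e: "e > 0" and "\<not> eventually (\<lambda>n. dist (a n) L < e) sequentially"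
    unfolding tendsto_iff by blast
  then have "infinite {n. \<not> dist (a n) L < e}"
    by (simp add: not_eventually frequently_cofinite[symmetric] cofinite_eq_sequentially)
  then obtain r :: "nat \<Rightarrow> nat" where r: "strict_mono r" "\<And>n. \<not> dist (a (r n)) L < e"
    using infinite_enumerate by blast
  obtain s where "(\<lambda>n. a (r (s n))) \<longlonglongrightarrow> L" using assms[OF r(1)] by blast
  then obtain n where "dist (a (r (s n))) L < e"
    using e unfolding tendsto_iff by (auto simp: eventually_sequentially)
  with r(2) show False by blast
qed

text \<open>Every subsequence has an a.e. convergent subsequence, to which dominated convergence applies.\<close>
lemma (in finite_measure) integral_tendsto_of_L1_tendsto:
  fixes Z :: "'a \<Rightarrow> 'b" and V :: "nat \<Rightarrow> 'a \<Rightarrow> real" and W :: "'a \<Rightarrow> real"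
    and H :: "'b \<Rightarrow> real \<Rightarrow> real"
  assumes [measurable]: "Z \<in> measurable M N" "\<And>n. V n \<in> borel_measurable M" "W \<in> borel_measurable M"
    and integrable: "\<And>n. integrable M (\<lambda>\<omega>. V n \<omega> - W \<omega>)"
    and L1: "(\<lambda>n. \<integral>\<omega>. \<bar>V n \<omega> - W \<omega>\<bar> \<partial>M) \<longlonglongrightarrow> 0"
    and [measurable]: "(\<lambda>(z, v). H z v) \<in> borel_measurable (N \<Otimes>\<^sub>M borel)"
    and H_cont: "\<And>z. continuous_on UNIV (H z)"
    and H_bounded: "\<And>z v. \<bar>H z v\<bar> \<le> B"
  shows "(\<lambda>n. \<integral>\<omega>. H (Z \<omega>) (V n \<omega>) \<partial>M) \<longlonglongrightarrow> (\<integral>\<omega>. H (Z \<omega>) (W \<omega>) \<partial>M)"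
proof (rule LIMSEQ_of_subsubseq)
  fix r :: "nat \<Rightarrow> nat" assume r: "strict_mono r"
  have "(\<lambda>n. \<integral>\<omega>. norm (V (r n) \<omega> - W \<omega>) \<partial>M) \<longlonglongrightarrow> 0"
    using LIMSEQ_subseq_LIMSEQ[OF L1 r] by (simp add: comp_def)
  then obtain s where s: "strict_mono s" and ae: "AE \<omega> in M. (\<lambda>n. V (r (s n)) \<omega> - W \<omega>) \<longlonglongrightarrow> 0"
    using tendsto_L1_AE_subseq[OF integrable] by blast
  have H_meas: "(\<lambda>\<omega>. H (Z \<omega>) (f \<omega>)) \<in> borel_measurable M" if [measurable]: "f \<in> borel_measurable M" for f
    using measurable_compose[of "\<lambda>\<omega>. (Z \<omega>, f \<omega>)" M "N \<Otimes>\<^sub>M borel" "\<lambda>(z, v). H z v"] by simp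
  have "(\<lambda>n. \<integral>\<omega>. H (Z \<omega>) (V (r (s n)) \<omega>) \<partial>M) \<longlonglongrightarrow> (\<integral>\<omega>. H (Z \<omega>) (W \<omega>) \<partial>M)"
  proof (rule integral_dominated_convergence[where w="\<lambda>_. B"])
    show "AE \<omega> in M. (\<lambda>n. H (Z \<omega>) (V (r (s n)) \<omega>)) \<longlonglongrightarrow> H (Z \<omega>) (W \<omega>)"
      using ae
    proof eventually_elim
      case (elim \<omega>)
      then have "(\<lambda>n. V (r (s n)) \<omega>) \<longlonglongrightarrow> W \<omega>"
        using tendsto_add[OF elim tendsto_const[of "W \<omega>"]] by simp
      moreover have "isCont (H (Z \<omega>)) (W \<omega>)"
        using H_cont[of "Z \<omega>"] by (simp add: continuous_on_eq_continuous_at)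
      ultimately show ?case by (rule isCont_tendsto_compose[rotated])
    qed
  qed (use H_meas H_bounded in auto)
  then show "\<exists>s. strict_mono s \<and> (\<lambda>n. \<integral>\<omega>. H (Z \<omega>) (V (r (s n)) \<omega>) \<partial>M) \<longlonglongrightarrow> (\<integral>\<omega>. H (Z \<omega>) (W \<omega>) \<partial>M)"
    using s by blast
qed

lemma abs_le_eps_plus_square:
  fixes x \<epsilon> :: real
  assumes "\<epsilon> > 0"
  shows "\<bar>x\<bar> \<le> \<epsilon> + x\<^sup>2 / \<epsilon>"
proof (cases "\<bar>x\<bar> \<le> \<epsilon>")
  case True
  then show ?thesis using assms by (simp add: add_increasing2)
next
  case False
  then have "\<bar>x\<bar> * \<epsilon> \<le> \<bar>x\<bar> * \<bar>x\<bar>" by (intro mult_left_mono) auto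
  then have "\<bar>x\<bar> \<le> x\<^sup>2 / \<epsilon>" using assms by (simp add: pos_le_divide_eq power2_eq_square)
  then show ?thesis using assms by linarith
qed

lemma (in finite_measure) L1_tendsto_zero_of_L2_tendsto_zero:
  fixes D :: "nat \<Rightarrow> 'a \<Rightarrow> real"
  assumes [measurable]: "\<And>n. D n \<in> borel_measurable M"
    and square_integrable: "\<And>n. integrable M (\<lambda>x. (D n x)\<^sup>2)"
    and L2: "(\<lambda>n. \<integral>x. (D n x)\<^sup>2 \<partial>M) \<longlonglongrightarrow> 0"
  shows "(\<lambda>n. \<integral>x. \<bar>D n x\<bar> \<partial>M) \<longlonglongrightarrow> 0"
proof (rule tendstoI)
  fix e :: real assume e: "e > 0"
  define C where "C = measure M (space M)"
  define \<epsilon> where "\<epsilon> = e / (2 * (C + 1))"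
  have C: "0 \<le> C" unfolding C_def by simp
  then have \<epsilon>: "\<epsilon> > 0" unfolding \<epsilon>_def using e by simp
  have bound: "(\<integral>x. \<bar>D n x\<bar> \<partial>M) \<le> \<epsilon> * C + (\<integral>x. (D n x)\<^sup>2 \<partial>M) / \<epsilon>" for n
  proof -
    have "(\<integral>x. \<bar>D n x\<bar> \<partial>M) \<le> (\<integral>x. \<epsilon> + (D n x)\<^sup>2 / \<epsilon> \<partial>M)"
      using square_integrable_imp_integrable[OF _ square_integrable] abs_le_eps_plus_square[OF \<epsilon>]
      by (intro integral_mono Bochner_Integration.integrable_add integrable_divide square_integrable) auto
    then show ?thesis
      using square_integrable[of n] by (simp add: C_def mult.commute)
  qed
  have "\<epsilon> * e / 2 > 0" using \<epsilon> e by simp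
  with L2 have "eventually (\<lambda>n. (\<integral>x. (D n x)\<^sup>2 \<partial>M) < \<epsilon> * e / 2) sequentially"
    by (auto simp: tendsto_iff dest!: spec[of _ "\<epsilon> * e / 2"])
  then show "eventually (\<lambda>n. dist (\<integral>x. \<bar>D n x\<bar> \<partial>M) 0 < e) sequentially"
  proof eventually_elim
    case (elim n)
    have "(\<integral>x. (D n x)\<^sup>2 \<partial>M) / \<epsilon> < e / 2" using elim \<epsilon> by (simp add: divide_less_eq mult.commute)
    moreover have "\<epsilon> * C < e / 2" using e C by (simp add: \<epsilon>_def field_simps)
    ultimately show ?case using bound[of n] by (simp add: field_simps)
  qed
qed

section \<open>Square integrable functions\<close>
lemma integrable_square_add:
  fixes f g :: "'a \<Rightarrow> real"
  assumes [measurable]: "f \<in> borel_measurable M" "g \<in> borel_measurable M"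
    and "integrable M (\<lambda>x. (f x)\<^sup>2)" "integrable M (\<lambda>x. (g x)\<^sup>2)"
  shows "integrable M (\<lambda>x. (f x + g x)\<^sup>2)"
proof (rule Bochner_Integration.integrable_bound)
  show "integrable M (\<lambda>x. 2 * (f x)\<^sup>2 + 2 * (g x)\<^sup>2)" using assms by auto
  have "(f x + g x)\<^sup>2 \<le> 2 * (f x)\<^sup>2 + 2 * (g x)\<^sup>2" for x
    using zero_le_power2[of "f x - g x"] unfolding power2_sum power2_diff by linarith
  then show "AE x in M. norm ((f x + g x)\<^sup>2) \<le> norm (2 * (f x)\<^sup>2 + 2 * (g x)\<^sup>2)"
    by (intro AE_I2) simp
qed measurable

lemma integrable_square_diff:
  fixes f g :: "'a \<Rightarrow> real"
  assumes "f \<in> borel_measurable M" "g \<in> borel_measurable M"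
    and "integrable M (\<lambda>x. (f x)\<^sup>2)" "integrable M (\<lambda>x. (g x)\<^sup>2)"
  shows "integrable M (\<lambda>x. (f x - g x)\<^sup>2)"
  using integrable_square_add[of f M "\<lambda>x. - g x"] assms by simp

lemma integrable_square_sum:
  fixes f :: "'i \<Rightarrow> 'a \<Rightarrow> real"
  assumes "finite A" "\<And>i. i \<in> A \<Longrightarrow> f i \<in> borel_measurable M"
    "\<And>i. i \<in> A \<Longrightarrow> integrable M (\<lambda>x. (f i x)\<^sup>2)"
  shows "integrable M (\<lambda>x. (\<Sum>i\<in>A. f i x)\<^sup>2)"
  using assms
proof (induction A rule: finite_induct)
  case (insert i A)
  then show ?case
    by (simp, intro integrable_square_add borel_measurable_sum) auto
qed simp

lemma (in pair_sigma_finite) integrable_mult_fst_snd: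
  fixes f :: "'a \<Rightarrow> real" and g :: "'b \<Rightarrow> real"
  assumes f: "integrable M1 f" and g: "integrable M2 g"
  shows "integrable (M1 \<Otimes>\<^sub>M M2) (\<lambda>x. f (fst x) * g (snd x))"
proof (subst integrable_iff_bounded, safe)
  have [measurable]: "f \<in> borel_measurable M1" "g \<in> borel_measurable M2" using f g by auto
  show "(\<lambda>x. f (fst x) * g (snd x)) \<in> borel_measurable (M1 \<Otimes>\<^sub>M M2)" by measurable
  have "(\<integral>\<^sup>+x. ennreal (norm (f (fst x) * g (snd x))) \<partial>(M1 \<Otimes>\<^sub>M M2))
      = (\<integral>\<^sup>+x. \<integral>\<^sup>+y. ennreal \<bar>f x\<bar> * ennreal \<bar>g y\<bar> \<partial>M2 \<partial>M1)"
    by (subst M2.nn_integral_fst[symmetric]) (auto simp: abs_mult ennreal_mult)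
  also have "\<dots> = (\<integral>\<^sup>+x. ennreal \<bar>f x\<bar> \<partial>M1) * (\<integral>\<^sup>+y. ennreal \<bar>g y\<bar> \<partial>M2)"
    by (simp add: nn_integral_cmult nn_integral_multc)
  also have "\<dots> < \<infinity>"
    using f g unfolding integrable_iff_bounded by (simp add: ennreal_mult_less_top)
  finally show "(\<integral>\<^sup>+x. ennreal (norm (f (fst x) * g (snd x))) \<partial>(M1 \<Otimes>\<^sub>M M2)) < \<infinity>" .
qed

section \<open>Independence of three random elements\<close>

lemma emeasure_distr_density_indicator:
  assumes A: "A \<in> sets M" and f: "f \<in> measurable M N" and T: "T \<in> sets N"
  shows "emeasure (distr (density M (indicator A)) N f) T = emeasure M (A \<inter> (f -` T \<inter> space M))"
proof -
  have fT: "f -` T \<inter> space M \<in> sets M" using f T by measurable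
  have "emeasure (distr (density M (indicator A)) N f) T = (\<integral>\<^sup>+\<omega>. indicator A \<omega> * indicator (f -` T \<inter> space M) \<omega> \<partial>M)"
    using A f T fT by (simp add: emeasure_distr emeasure_density)
  also have "\<dots> = (\<integral>\<^sup>+\<omega>. indicator (A \<inter> (f -` T \<inter> space M)) \<omega> \<partial>M)"
    by (intro nn_integral_cong) (auto split: split_indicator)
  also have "\<dots> = emeasure M (A \<inter> (f -` T \<inter> space M))"
    using A fT by (intro nn_integral_indicator) auto
  finally show ?thesis .
qed

context prob_space
begin

lemma indep3_measurable:
  assumes "indep3 M1 X M2 Y M3 Z"
  shows "X \<in> measurable M M1" "Y \<in> measurable M M2" "Z \<in> measurable M M3"
  using assms unfolding indep3_def by auto

lemma indep3_emeasure:
  assumes "indep3 M1 X M2 Y M3 Z" "A \<in> sets M1" "B \<in> sets M2" "C \<in> sets M3"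
  shows "emeasure M (X -` A \<inter> Y -` B \<inter> Z -` C \<inter> space M) =
         emeasure (distr M M1 X) A * emeasure (distr M M2 Y) B * emeasure (distr M M3 Z) C"
proof -
  have "prob (X -` A \<inter> Y -` B \<inter> Z -` C \<inter> space M) =
        prob (X -` A \<inter> space M) * prob (Y -` B \<inter> space M) * prob (Z -` C \<inter> space M)"
    using assms unfolding indep3_def by blast
  then show ?thesis
    using assms indep3_measurable[OF assms(1)]
    by (simp add: emeasure_distr emeasure_eq_measure ennreal_mult'[symmetric] measure_nonneg)
qed

text \<open>Both sides, as measures in \<open>S\<close>, agree on the generating rectangles by \<open>indep3_emeasure\<close>.\<close>
lemma indep3_emeasure_pair:
  assumes I: "indep3 M1 X M2 Y M3 Z" and A: "A \<in> sets M1" and S: "S \<in> sets (M2 \<Otimes>\<^sub>M M3)"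
  shows "emeasure M (X -` A \<inter> (\<lambda>\<omega>. (Y \<omega>, Z \<omega>)) -` S \<inter> space M) =
         emeasure (distr M M1 X) A * emeasure (distr M M2 Y \<Otimes>\<^sub>M distr M M3 Z) S"
proof -
  note [measurable] = indep3_measurable[OF I]
  interpret D3: prob_space "distr M M3 Z" by (rule prob_space_distr) simp
  define N1 where "N1 = distr (density M (indicator (X -` A \<inter> space M))) (M2 \<Otimes>\<^sub>M M3) (\<lambda>\<omega>. (Y \<omega>, Z \<omega>))"
  define N2 where "N2 = density (distr M M2 Y \<Otimes>\<^sub>M distr M M3 Z) (\<lambda>_. emeasure (distr M M1 X) A)"
  have XA: "X -` A \<inter> space M \<in> sets M" using A by measurable
  have N1: "emeasure N1 T = emeasure M (X -` A \<inter> (\<lambda>\<omega>. (Y \<omega>, Z \<omega>)) -` T \<inter> space M)"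
    if "T \<in> sets (M2 \<Otimes>\<^sub>M M3)" for T
    unfolding N1_def using XA that by (subst emeasure_distr_density_indicator) (auto intro!: arg_cong[where f="emeasure M"])
  have "N1 = N2"
  proof (rule measure_eqI_generator_eq[OF Int_stable_pair_measure_generator pair_measure_closed])
    fix T assume "T \<in> {a \<times> b |a b. a \<in> sets M2 \<and> b \<in> sets M3}"
    then obtain a b where T: "T = a \<times> b" and ab: "a \<in> sets M2" "b \<in> sets M3" by blast
    have "emeasure N1 T = emeasure M (X -` A \<inter> Y -` a \<inter> Z -` b \<inter> space M)"
      using N1[of T] ab unfolding T by (auto intro!: arg_cong[where f="emeasure M"])
    also have "\<dots> = emeasure N2 T"
      unfolding N2_def T using A ab
      by (simp add: indep3_emeasure[OF I] emeasure_density_const D3.emeasure_pair_measure_Times mult.assoc)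
    finally show "emeasure N1 T = emeasure N2 T" .
  next
    show "sets N1 = sigma_sets (space M2 \<times> space M3) {a \<times> b |a b. a \<in> sets M2 \<and> b \<in> sets M3}"
      unfolding N1_def by (simp add: sets_pair_measure)
    show "sets N2 = sigma_sets (space M2 \<times> space M3) {a \<times> b |a b. a \<in> sets M2 \<and> b \<in> sets M3}"
      unfolding N2_def by (simp add: sets_pair_measure[symmetric])
    show "range (\<lambda>_. space M2 \<times> space M3) \<subseteq> {a \<times> b |a b. a \<in> sets M2 \<and> b \<in> sets M3}" by blast
    show "(\<Union>i. space M2 \<times> space M3) = space M2 \<times> space M3" by simp
    have "emeasure N1 (space M2 \<times> space M3) \<le> emeasure M (space M)"
      by (subst N1) (auto simp: space_pair_measure intro!: emeasure_mono)
    then show "emeasure N1 (space M2 \<times> space M3) \<noteq> \<infinity>"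
      using emeasure_space_1 by (auto simp: top_unique)
  qed
  then show ?thesis
    using N1[OF S] S unfolding N2_def by (simp add: emeasure_density_const)
qed

lemma indep3_distr_eq_pair_measure:
  assumes I: "indep3 M1 X M2 Y M3 Z"
  shows "distr M (M1 \<Otimes>\<^sub>M (M2 \<Otimes>\<^sub>M M3)) (\<lambda>\<omega>. (X \<omega>, Y \<omega>, Z \<omega>)) =
         distr M M1 X \<Otimes>\<^sub>M (distr M M2 Y \<Otimes>\<^sub>M distr M M3 Z)"
proof (rule pair_measure_eqI[symmetric])
  note [measurable] = indep3_measurable[OF I]
  interpret D1: prob_space "distr M M1 X" by (rule prob_space_distr) simp
  interpret D2: prob_space "distr M M2 Y" by (rule prob_space_distr) simp
  interpret D3: prob_space "distr M M3 Z" by (rule prob_space_distr) simp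
  interpret D23: pair_prob_space "distr M M2 Y" "distr M M3 Z" ..
  show "sigma_finite_measure (distr M M1 X)" "sigma_finite_measure (distr M M2 Y \<Otimes>\<^sub>M distr M M3 Z)"
    by unfold_locales
  show "sets (distr M M1 X \<Otimes>\<^sub>M (distr M M2 Y \<Otimes>\<^sub>M distr M M3 Z)) =
        sets (distr M (M1 \<Otimes>\<^sub>M (M2 \<Otimes>\<^sub>M M3)) (\<lambda>\<omega>. (X \<omega>, Y \<omega>, Z \<omega>)))"
    by simp
  fix A S assume "A \<in> sets (distr M M1 X)" "S \<in> sets (distr M M2 Y \<Otimes>\<^sub>M distr M M3 Z)"
  then have A: "A \<in> sets M1" and S: "S \<in> sets (M2 \<Otimes>\<^sub>M M3)" by auto
  have "emeasure (distr M (M1 \<Otimes>\<^sub>M (M2 \<Otimes>\<^sub>M M3)) (\<lambda>\<omega>. (X \<omega>, Y \<omega>, Z \<omega>))) (A \<times> S)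
      = emeasure M (X -` A \<inter> (\<lambda>\<omega>. (Y \<omega>, Z \<omega>)) -` S \<inter> space M)"
    using A S by (subst emeasure_distr) (auto intro!: arg_cong[where f="emeasure M"])
  then show "emeasure (distr M M1 X) A * emeasure (distr M M2 Y \<Otimes>\<^sub>M distr M M3 Z) S =
      emeasure (distr M (M1 \<Otimes>\<^sub>M (M2 \<Otimes>\<^sub>M M3)) (\<lambda>\<omega>. (X \<omega>, Y \<omega>, Z \<omega>))) (A \<times> S)"
    using indep3_emeasure_pair[OF I A S] by simp
qed

lemma indep3_nn_integral:
  assumes I: "indep3 M1 X M2 Y M3 Z" and [measurable]: "g \<in> borel_measurable (M1 \<Otimes>\<^sub>M (M2 \<Otimes>\<^sub>M M3))"
  shows "(\<integral>\<^sup>+\<omega>. g (X \<omega>, Y \<omega>, Z \<omega>) \<partial>M) =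
         (\<integral>\<^sup>+x. \<integral>\<^sup>+z. \<integral>\<^sup>+y. g (x, y, z) \<partial>distr M M2 Y \<partial>distr M M3 Z \<partial>distr M M1 X)"
proof -
  note [measurable] = indep3_measurable[OF I]
  interpret D1: prob_space "distr M M1 X" by (rule prob_space_distr) simp
  interpret D2: prob_space "distr M M2 Y" by (rule prob_space_distr) simp
  interpret D3: prob_space "distr M M3 Z" by (rule prob_space_distr) simp
  interpret D23: pair_prob_space "distr M M2 Y" "distr M M3 Z" ..
  interpret D123: pair_prob_space "distr M M1 X" "distr M M2 Y \<Otimes>\<^sub>M distr M M3 Z" ..
  have "(\<integral>\<^sup>+\<omega>. g (X \<omega>, Y \<omega>, Z \<omega>) \<partial>M) = (\<integral>\<^sup>+p. g p \<partial>(distr M M1 X \<Otimes>\<^sub>M (distr M M2 Y \<Otimes>\<^sub>M distr M M3 Z)))"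
    by (simp add: nn_integral_distr indep3_distr_eq_pair_measure[OF I, symmetric])
  also have "\<dots> = (\<integral>\<^sup>+x. \<integral>\<^sup>+q. g (x, q) \<partial>(distr M M2 Y \<Otimes>\<^sub>M distr M M3 Z) \<partial>distr M M1 X)"
    by (rule D23.P.nn_integral_fst[symmetric]) simp
  also have "\<dots> = (\<integral>\<^sup>+x. \<integral>\<^sup>+z. \<integral>\<^sup>+y. g (x, y, z) \<partial>distr M M2 Y \<partial>distr M M3 Z \<partial>distr M M1 X)"
  proof (rule nn_integral_cong)
    fix x assume "x \<in> space (distr M M1 X)"
    then have [measurable]: "x \<in> space M1" by simp
    show "(\<integral>\<^sup>+q. g (x, q) \<partial>(distr M M2 Y \<Otimes>\<^sub>M distr M M3 Z)) =
          (\<integral>\<^sup>+z. \<integral>\<^sup>+y. g (x, y, z) \<partial>distr M M2 Y \<partial>distr M M3 Z)"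
      by (rule D23.nn_integral_snd[symmetric]) measurable
  qed
  finally show ?thesis .
qed

lemma indep3_nn_integral_23:
  assumes I: "indep3 M1 X M2 Y M3 Z" and [measurable]: "g \<in> borel_measurable (M2 \<Otimes>\<^sub>M M3)"
  shows "(\<integral>\<^sup>+\<omega>. g (Y \<omega>, Z \<omega>) \<partial>M) = (\<integral>\<^sup>+z. \<integral>\<^sup>+y. g (y, z) \<partial>distr M M2 Y \<partial>distr M M3 Z)"
proof -
  note [measurable] = indep3_measurable[OF I]
  interpret D1: prob_space "distr M M1 X" by (rule prob_space_distr) simp
  show ?thesis
    using indep3_nn_integral[OF I, of "\<lambda>(x, q). g q"] D1.emeasure_space_1 by simp
qed

lemma indep3_nn_integral_13:
  assumes I: "indep3 M1 X M2 Y M3 Z" and [measurable]: "g \<in> borel_measurable (M1 \<Otimes>\<^sub>M M3)"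
  shows "(\<integral>\<^sup>+\<omega>. g (X \<omega>, Z \<omega>) \<partial>M) = (\<integral>\<^sup>+z. \<integral>\<^sup>+x. g (x, z) \<partial>distr M M1 X \<partial>distr M M3 Z)"
proof -
  note [measurable] = indep3_measurable[OF I]
  interpret D1: prob_space "distr M M1 X" by (rule prob_space_distr) simp
  interpret D2: prob_space "distr M M2 Y" by (rule prob_space_distr) simp
  interpret D3: prob_space "distr M M3 Z" by (rule prob_space_distr) simp
  interpret D31: pair_prob_space "distr M M3 Z" "distr M M1 X" ..
  have "(\<integral>\<^sup>+\<omega>. g (X \<omega>, Z \<omega>) \<partial>M) = (\<integral>\<^sup>+x. \<integral>\<^sup>+z. g (x, z) \<partial>distr M M3 Z \<partial>distr M M1 X)"
    using indep3_nn_integral[OF I, of "\<lambda>(x, y, z). g (x, z)"] D2.emeasure_space_1 by simp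
  also have "\<dots> = (\<integral>\<^sup>+z. \<integral>\<^sup>+x. g (x, z) \<partial>distr M M1 X \<partial>distr M M3 Z)"
  proof -
    have "case_prod (\<lambda>z x. g (x, z)) \<in> borel_measurable (distr M M3 Z \<Otimes>\<^sub>M distr M M1 X)" by measurable
    from D31.Fubini'[OF this] show ?thesis by simp
  qed
  finally show ?thesis .
qed

end

section \<open>Identifying a density by cutoff functions\<close>

text \<open>Continuous functions with values in \<open>[0, 1]\<close>, supported in
  \<open>{w. b < w \<and> 1 / (n + 1) < \<bar>w\<bar> < n + 1}\<close> and increasing in \<open>n\<close> to the indicator of
  \<open>{b<..} - {0}\<close>. They suffice to identify a law that does not charge \<open>0\<close>.\<close>
definition cutoff :: "real \<Rightarrow> nat \<Rightarrow> real \<Rightarrow> real" where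
  "cutoff b n w = max 0 (min 1 (real (Suc n) * min (w - b) (min (\<bar>w\<bar> - 1 / real (Suc n)) (real (Suc n) - \<bar>w\<bar>))))"

lemma continuous_on_cutoff: "continuous_on UNIV (cutoff b n)"
  unfolding cutoff_def[abs_def] by (intro continuous_intros)

lemma borel_measurable_cutoff[measurable]: "cutoff b n \<in> borel_measurable borel"
  by (rule borel_measurable_continuous_onI[OF continuous_on_cutoff])

lemma cutoff_nonneg: "0 \<le> cutoff b n w" and cutoff_le_one: "cutoff b n w \<le> 1"
  unfolding cutoff_def by auto

lemma cutoff_support:
  assumes "cutoff b n w \<noteq> 0"
  shows "1 / real (Suc n) < \<bar>w\<bar>" "\<bar>w\<bar> < real (Suc n)"
proof -
  have clamp: "max 0 (min 1 x) \<noteq> 0 \<Longrightarrow> 0 < x" for x :: real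
    by (cases "x \<le> 0") auto
  have "0 < real (Suc n) * min (w - b) (min (\<bar>w\<bar> - 1 / real (Suc n)) (real (Suc n) - \<bar>w\<bar>))"
    using clamp assms unfolding cutoff_def by blast
  then show "1 / real (Suc n) < \<bar>w\<bar>" "\<bar>w\<bar> < real (Suc n)"
    by (auto simp: zero_less_mult_iff)
qed

lemma cutoff_mono:
  assumes "m \<le> n"
  shows "cutoff b m w \<le> cutoff b n w"
proof -
  define r where "r = real (Suc m)"
  define r' where "r' = real (Suc n)"
  define q where "q = min (w - b) (min (\<bar>w\<bar> - 1 / r) (r - \<bar>w\<bar>))"
  define q' where "q' = min (w - b) (min (\<bar>w\<bar> - 1 / r') (r' - \<bar>w\<bar>))"
  have r: "0 < r" "r \<le> r'" using assms by (auto simp: r_def r'_def)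
  then have "1 / r' \<le> 1 / r" by (simp add: frac_le)
  then have "q \<le> q'" unfolding q_def q'_def using r by auto
  have "r * q \<le> max 0 (r' * q')"
  proof (cases "q \<le> 0")
    case True
    then have "r * q \<le> 0" using r by (simp add: mult_nonneg_nonpos)
    then show ?thesis by simp
  next
    case False
    then have "r * q \<le> r' * q'" using r \<open>q \<le> q'\<close> by (intro mult_mono) auto
    then show ?thesis by simp
  qed
  then have "max 0 (min 1 (r * q)) \<le> max 0 (min 1 (r' * q'))"
    by (cases "r' * q' \<le> 0"; cases "r * q \<le> 0"; cases "1 \<le> r * q"; cases "1 \<le> r' * q'") auto
  then show ?thesis unfolding cutoff_def r_def r'_def q_def q'_def .
qed

lemma cutoff_tendsto: "(\<lambda>n. cutoff b n w) \<longlonglongrightarrow> (if b < w \<and> w \<noteq> 0 then 1 else 0)"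
proof (cases "b < w \<and> w \<noteq> 0")
  case True
  define \<delta> where "\<delta> = min (w - b) (\<bar>w\<bar> / 2)"
  have \<delta>: "0 < \<delta>" using True by (simp add: \<delta>_def)
  obtain k :: nat where k: "max (2 / \<bar>w\<bar>) (max (\<bar>w\<bar> + \<delta>) (1 / \<delta>)) < real k"
    using reals_Archimedean2 by blast
  have "eventually (\<lambda>n. cutoff b n w = 1) sequentially"
    using eventually_ge_at_top[of k]
  proof eventually_elim
    case (elim n)
    define r where "r = real (Suc n)"
    have r: "real k < r" "0 < r" using elim by (simp_all add: r_def)
    then have "2 / \<bar>w\<bar> < r" using k by simp
    then have "1 / r \<le> \<bar>w\<bar> / 2" using True r by (simp add: field_simps)
    moreover have "\<bar>w\<bar> + \<delta> \<le> r" using k r by simp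
    ultimately have "\<delta> \<le> min (w - b) (min (\<bar>w\<bar> - 1 / r) (r - \<bar>w\<bar>))"
      unfolding \<delta>_def by auto
    moreover have "1 / \<delta> < r" using k r by simp
    then have "1 \<le> r * \<delta>" using \<delta> by (simp add: field_simps)
    ultimately have "1 \<le> r * min (w - b) (min (\<bar>w\<bar> - 1 / r) (r - \<bar>w\<bar>))"
      using r by (meson mult_left_mono order.trans less_imp_le)
    then show ?case unfolding cutoff_def r_def[symmetric] by simp
  qed
  then show ?thesis using True by (simp add: tendsto_eventually)
next
  case False
  have "cutoff b n w = 0" for n
  proof -
    have "min (w - b) (min (\<bar>w\<bar> - 1 / real (Suc n)) (real (Suc n) - \<bar>w\<bar>)) \<le> 0"
      using False by (auto simp: min_le_iff_disj)
    then have "real (Suc n) * min (w - b) (min (\<bar>w\<bar> - 1 / real (Suc n)) (real (Suc n) - \<bar>w\<bar>)) \<le> 0"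
      by (rule mult_nonneg_nonpos[rotated]) simp
    then show ?thesis unfolding cutoff_def by simp
  qed
  then show ?thesis using False by (simp del: de_Morgan_conj)
qed

lemma cutoff_mult_le:
  assumes "0 \<le> g" "g \<le> B / \<bar>w\<bar>" "0 \<le> B"
  shows "cutoff b n w * g \<le> indicator {- real (Suc n)..real (Suc n)} w * (B * real (Suc n))"
proof (cases "cutoff b n w = 0")
  case True
  then show ?thesis using assms by (simp add: indicator_def)
next
  case False
  note support = cutoff_support[OF False]
  moreover have "0 < \<bar>w\<bar>" by (rule le_less_trans[OF _ support(1)]) simp
  ultimately have "1 / \<bar>w\<bar> \<le> real (Suc n)" by (simp add: field_simps)
  then have "g \<le> B * real (Suc n)"
    using assms mult_left_mono[of "1 / \<bar>w\<bar>" "real (Suc n)" B] by simp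
  then have "cutoff b n w * g \<le> B * real (Suc n)"
    using cutoff_le_one[of b n w] assms(1) by (meson mult_left_le_one_le order_trans cutoff_nonneg)
  moreover have "indicator {- real (Suc n)..real (Suc n)} w = (1::real)"
    using support by (auto simp: indicator_def)
  ultimately show ?thesis by simp
qed

lemma nn_integral_cutoff_tendsto:
  fixes Y g :: "'a \<Rightarrow> real"
  assumes [measurable]: "Y \<in> borel_measurable N" "g \<in> borel_measurable N" and g_nonneg: "\<And>x. 0 \<le> g x"
  shows "(\<lambda>n. \<integral>\<^sup>+x. ennreal (cutoff b n (Y x) * g x) \<partial>N)
    \<longlonglongrightarrow> (\<integral>\<^sup>+x. ennreal (indicator ({b<..} - {0}) (Y x) * g x) \<partial>N)"
proof (rule nn_integral_LIMSEQ)
  show "incseq (\<lambda>n x. ennreal (cutoff b n (Y x) * g x))"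
    by (auto simp: incseq_def le_fun_def intro!: ennreal_leI mult_right_mono cutoff_mono g_nonneg)
  have "indicator ({b<..} - {0}) (Y x) = (if b < Y x \<and> Y x \<noteq> 0 then 1 else 0 :: real)" for x
    by (simp add: indicator_def)
  then show "(\<lambda>n. ennreal (cutoff b n (Y x) * g x)) \<longlonglongrightarrow> ennreal (indicator ({b<..} - {0}) (Y x) * g x)" for x
    by (intro tendsto_ennrealI tendsto_mult tendsto_const) (simp add: cutoff_tendsto)
qed measurable

lemma (in prob_space) emeasure_distr_greaterThan_if_cutoff_integrals:
  fixes X :: "'a \<Rightarrow> real" and f :: "real \<Rightarrow> real"
  assumes [measurable]: "X \<in> borel_measurable M" "f \<in> borel_measurable borel"
    and f_nonneg: "\<And>w. 0 \<le> f w" and X_nonzero: "AE \<omega> in M. X \<omega> \<noteq> 0"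
    and cutoff_integrals: "\<And>b n. (\<integral>\<^sup>+\<omega>. ennreal (cutoff b n (X \<omega>)) \<partial>M) = (\<integral>\<^sup>+w. ennreal (cutoff b n w * f w) \<partial>lborel)"
  shows "emeasure (distr M lborel X) {b<..} = emeasure (density lborel (\<lambda>w. ennreal (f w))) {b<..}"
proof -
  let ?u = "indicator ({b<..} - {0}) :: real \<Rightarrow> real"
  have "(\<lambda>n. \<integral>\<^sup>+\<omega>. ennreal (cutoff b n (X \<omega>)) \<partial>M) \<longlonglongrightarrow> (\<integral>\<^sup>+\<omega>. ennreal (?u (X \<omega>)) \<partial>M)"
    using nn_integral_cutoff_tendsto[of X M "\<lambda>_. 1" b] by simp
  moreover have "(\<lambda>n. \<integral>\<^sup>+w. ennreal (cutoff b n w * f w) \<partial>lborel) \<longlonglongrightarrow> (\<integral>\<^sup>+w. ennreal (?u w * f w) \<partial>lborel)"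
    using nn_integral_cutoff_tendsto[of "\<lambda>w. w" lborel f b] f_nonneg by simp
  ultimately have u: "(\<integral>\<^sup>+\<omega>. ennreal (?u (X \<omega>)) \<partial>M) = (\<integral>\<^sup>+w. ennreal (?u w * f w) \<partial>lborel)"
    unfolding cutoff_integrals by (rule LIMSEQ_unique)
  have "emeasure (distr M lborel X) {b<..} = emeasure M (X -` {b<..} \<inter> space M)"
    by (rule emeasure_distr) auto
  also have "\<dots> = (\<integral>\<^sup>+\<omega>. indicator (X -` {b<..} \<inter> space M) \<omega> \<partial>M)"
    by (rule nn_integral_indicator[symmetric]) measurable
  also have "\<dots> = (\<integral>\<^sup>+\<omega>. ennreal (?u (X \<omega>)) \<partial>M)"
  proof (rule nn_integral_cong_AE)
    show "AE \<omega> in M. indicator (X -` {b<..} \<inter> space M) \<omega> = ennreal (?u (X \<omega>))"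
      using X_nonzero AE_space by eventually_elim (auto simp: indicator_def)
  qed
  also have "\<dots> = (\<integral>\<^sup>+w. ennreal (f w) * indicator {b<..} w \<partial>lborel)"
    unfolding u
  proof (rule nn_integral_cong_AE)
    show "AE w in lborel. ennreal (?u w * f w) = ennreal (f w) * indicator {b<..} w"
      using AE_lborel_singleton[of 0] by eventually_elim (auto simp: indicator_def)
  qed
  also have "\<dots> = emeasure (density lborel (\<lambda>w. ennreal (f w))) {b<..}"
    by (rule emeasure_density[symmetric]) auto
  finally show ?thesis .
qed

lemma (in prob_space) distributed_if_cutoff_integrals:
  fixes X :: "'a \<Rightarrow> real" and f :: "real \<Rightarrow> real"
  assumes [measurable]: "X \<in> borel_measurable M" "f \<in> borel_measurable borel"
    and "\<And>w. 0 \<le> f w" "AE \<omega> in M. X \<omega> \<noteq> 0"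
    and "\<And>b n. (\<integral>\<^sup>+\<omega>. ennreal (cutoff b n (X \<omega>)) \<partial>M) = (\<integral>\<^sup>+w. ennreal (cutoff b n w * f w) \<partial>lborel)"
  shows "distributed M lborel X (\<lambda>w. ennreal (f w))"
  unfolding distributed_def
proof (intro conjI)
  show "distr M lborel X = density lborel (\<lambda>w. ennreal (f w))"
  proof (rule measure_eqI_lessThan)
    interpret X: prob_space "distr M lborel X" by (rule prob_space_distr) simp
    show "emeasure (distr M lborel X) {b<..} < \<infinity>" for b
      by (simp add: less_top[symmetric])
  qed (use emeasure_distr_greaterThan_if_cutoff_integrals assms in simp_all)
  show "(\<lambda>w. ennreal (f w)) \<in> borel_measurable lborel" "X \<in> measurable M lborel" by simp_all
qed

section \<open>The exponential growth model\<close>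

locale exp_KL_model =
  fixes M :: "'a measure" and t0 T :: real
    and x0 :: "'a \<Rightarrow> real" and a :: "real \<Rightarrow> 'a \<Rightarrow> real"
    and \<nu> :: "nat \<Rightarrow> real" and \<phi> :: "nat \<Rightarrow> real \<Rightarrow> real" and \<xi> :: "nat \<Rightarrow> 'a \<Rightarrow> real"
    and f0 :: "real \<Rightarrow> real" and fxi1 :: "real \<Rightarrow> real"
    and fxi :: "nat \<Rightarrow> (nat \<Rightarrow> real) \<Rightarrow> real" and t :: real
  assumes P: "prob_space M"
    and tT: "t0 < T"
    and KL: "KL_expansion M t0 T a \<nu> \<phi> \<xi>" and nu1: "\<nu> 1 > 0"
    and H1: "L2_process M t0 T a"
    and f0_nonneg: "\<And>z. 0 \<le> f0 z"
    and f0_dens: "distributed M lborel x0 (\<lambda>z. ennreal (f0 z))"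
    and fxi1_nonneg: "\<And>z. 0 \<le> fxi1 z"
    and fxi1_dens: "distributed M lborel (\<xi> 1) (\<lambda>z. ennreal (fxi1 z))"
    and H2_indep: "\<And>N. N \<ge> 2 \<Longrightarrow> prob_space.indep3 M lborel x0 lborel (\<xi> 1)
                    (PiM {2..N} (\<lambda>_. lborel)) (\<lambda>\<omega>. restrict (\<lambda>j. \<xi> j \<omega>) {2..N})"
    and H3: "continuous_on UNIV fxi1" "bounded (range fxi1)"
    and H4: "\<And>t. t \<in> {t0<..T} \<Longrightarrow> (LINT s:{t0..t}|lborel. \<phi> 1 s) \<noteq> 0"
    and fxi_nonneg: "\<And>N y. 0 \<le> fxi N y"
    and fxi_dens: "\<And>N. N \<ge> 1 \<Longrightarrow> distributed M (PiM {1..N} (\<lambda>_. lborel)) (xi_vec \<xi> N)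
                          (\<lambda>y. ennreal (fxi N y))"
    and t: "t \<in> {t0<..T}"
begin

sublocale prob_space M by (rule P)

definition "Leb = restrict_space lborel {t0..T}"
definition "ind s = (indicator {t0..t} s :: real)"
definition "mu s = mean_proc M a s"
definition "K0 = (LINT s:{t0..t}|lborel. mu s)"
definition "d j = sqrt (\<nu> j) * (LINT s:{t0..t}|lborel. \<phi> j s)"
definition "c = d 1"
definition "KN N \<omega> = K0 + (\<Sum>j\<in>{1..N}. d j * \<xi> j \<omega>)"
definition "A_t \<omega> = (LINT s:{t0..t}|lborel. a s \<omega>)"
definition "residual N s \<omega> = a s \<omega> - mu s - (\<Sum>j\<in>{1..N}. sqrt (\<nu> j) * \<phi> j s * \<xi> j \<omega>)"

lemma phi_measurable[measurable]: "j \<ge> 1 \<Longrightarrow> \<phi> j \<in> borel_measurable lborel"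
  and phi_square_integrable: "j \<ge> 1 \<Longrightarrow> set_integrable lborel {t0..T} (\<lambda>s. (\<phi> j s)\<^sup>2)"
  and xi_measurable[measurable]: "j \<ge> 1 \<Longrightarrow> \<xi> j \<in> borel_measurable M"
  and xi_square_integrable: "j \<ge> 1 \<Longrightarrow> integrable M (\<lambda>\<omega>. (\<xi> j \<omega>)\<^sup>2)"
  using KL unfolding KL_expansion_def by auto

lemma residual_L2_tendsto: "(\<lambda>N. integral\<^sup>L (Leb \<Otimes>\<^sub>M M) (\<lambda>(s,\<omega>). (residual N s \<omega>)\<^sup>2)) \<longlonglongrightarrow> 0"
  using KL unfolding KL_expansion_def Leb_def residual_def mu_def by auto

lemma a_measurable[measurable]: "(\<lambda>(s,\<omega>). a s \<omega>) \<in> borel_measurable (Leb \<Otimes>\<^sub>M M)"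
  and a_square_integrable: "integrable (Leb \<Otimes>\<^sub>M M) (\<lambda>(s,\<omega>). (a s \<omega>)\<^sup>2)"
  using H1 unfolding L2_process_def Leb_def by auto

lemma x0_measurable[measurable]: "x0 \<in> borel_measurable M"
  using distributed_measurable[OF f0_dens] by simp

lemma finite_measure_Leb: "finite_measure Leb"
proof (rule finite_measureI)
  have "emeasure Leb (space Leb) = emeasure lborel {t0..T}"
    unfolding Leb_def by (simp add: space_restrict_space emeasure_restrict_space)
  then show "emeasure Leb (space Leb) \<noteq> \<infinity>" using tT by simp
qed

sublocale Leb: finite_measure Leb by (rule finite_measure_Leb)
sublocale LebM: pair_sigma_finite Leb M ..
sublocale LebxM: finite_measure "Leb \<Otimes>\<^sub>M M"
  by (rule finite_measure_pair_measure) (rule P[THEN prob_space.finite_measure], rule finite_measure_Leb)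

lemma ind_measurable[measurable]: "ind \<in> borel_measurable Leb" "ind \<in> borel_measurable lborel"
  unfolding ind_def Leb_def by (auto intro!: measurable_restrict_space1)

lemma LINT_eq_integral_Leb: "(LINT s:{t0..t}|lborel. f s) = (\<integral>s. ind s * f s \<partial>Leb)"
proof -
  have "(\<integral>s. ind s * f s \<partial>Leb) = (\<integral>s. indicator {t0..T} s *\<^sub>R (ind s * f s) \<partial>lborel)"
    unfolding Leb_def by (rule integral_restrict_space) auto
  also have "\<dots> = (LINT s:{t0..t}|lborel. f s)"
    unfolding set_lebesgue_integral_def using t
    by (intro Bochner_Integration.integral_cong) (auto simp: ind_def split: split_indicator)
  finally show ?thesis ..
qed

lemma integrable_ind_mult:
  assumes f: "integrable Leb f"
  shows "integrable Leb (\<lambda>s. ind s * f s)"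
proof (rule Bochner_Integration.integrable_bound[OF f])
  have [measurable]: "f \<in> borel_measurable Leb" using f by auto
  show "(\<lambda>s. ind s * f s) \<in> borel_measurable Leb" by measurable
qed (auto simp: ind_def split: split_indicator)

lemma phi_measurable_Leb[measurable]: "j \<ge> 1 \<Longrightarrow> \<phi> j \<in> borel_measurable Leb"
  unfolding Leb_def by (auto intro!: measurable_restrict_space1)

lemma phi_square_integrable_Leb: "j \<ge> 1 \<Longrightarrow> integrable Leb (\<lambda>s. (\<phi> j s)\<^sup>2)"
  using phi_square_integrable unfolding Leb_def set_integrable_def
  by (subst integrable_restrict_space) auto

lemma integrable_phi_Leb: "j \<ge> 1 \<Longrightarrow> integrable Leb (\<phi> j)"
  by (rule Leb.square_integrable_imp_integrable) (auto intro: phi_square_integrable_Leb)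

lemma integrable_a: "integrable (Leb \<Otimes>\<^sub>M M) (\<lambda>(s,\<omega>). a s \<omega>)"
  using LebxM.square_integrable_imp_integrable[OF a_measurable] a_square_integrable
  by (simp add: split_beta')

lemma mu_measurable[measurable]: "mu \<in> borel_measurable Leb"
proof -
  have "(\<lambda>s. \<integral>\<omega>. a s \<omega> \<partial>M) \<in> borel_measurable Leb" by measurable
  then show ?thesis unfolding mu_def mean_proc_def by simp
qed

lemma integrable_mu: "integrable Leb mu"
  using LebM.integrable_fst[OF integrable_a] unfolding mu_def mean_proc_def by simp

text \<open>The mean is square integrable because \<open>(E a(s))\<^sup>2 \<le> E (a(s)\<^sup>2)\<close> (the variance is nonnegative).\<close>
lemma mu_square_integrable: "integrable Leb (\<lambda>s. (mu s)\<^sup>2)"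
proof (rule Bochner_Integration.integrable_bound)
  show "integrable Leb (\<lambda>s. \<integral>\<omega>. (a s \<omega>)\<^sup>2 \<partial>M)" using LebM.integrable_fst[OF a_square_integrable] by simp
  show "AE s in Leb. norm ((mu s)\<^sup>2) \<le> norm (\<integral>\<omega>. (a s \<omega>)\<^sup>2 \<partial>M)"
    using LebM.AE_integrable_fst[OF a_square_integrable] AE_space[of Leb]
  proof eventually_elim
    case (elim s)
    have a_s: "a s \<in> borel_measurable M"
      using measurable_Pair2[OF a_measurable, of s] elim by simp
    have "integrable M (a s)"
      by (rule square_integrable_imp_integrable) (use elim a_s in auto)
    then have "variance (a s) = expectation (\<lambda>\<omega>. (a s \<omega>)\<^sup>2) - (expectation (a s))\<^sup>2"
      by (rule variance_eq) (use elim in auto)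
    with variance_positive[of "a s"] show ?case unfolding mu_def mean_proc_def by simp
  qed
qed measurable

lemma integrable_ind_phi: "j \<ge> 1 \<Longrightarrow> integrable Leb (\<lambda>s. ind s * \<phi> j s)"
  by (rule integrable_ind_mult[OF integrable_phi_Leb])

lemma integrable_ind_mu: "integrable Leb (\<lambda>s. ind s * mu s)"
  by (rule integrable_ind_mult[OF integrable_mu])

lemma integral_sum_ind_phi:
  "(\<integral>s. (\<Sum>j\<in>{1..N}. k j * (ind s * \<phi> j s)) \<partial>Leb) = (\<Sum>j\<in>{1..N}. k j * (\<integral>s. ind s * \<phi> j s \<partial>Leb))"
  by (subst Bochner_Integration.integral_sum)
    (auto intro!: Bochner_Integration.integrable_mult_right integrable_ind_phi)

lemma integrable_sum_ind_phi: "integrable Leb (\<lambda>s. \<Sum>j\<in>{1..N}. k j * (ind s * \<phi> j s))"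
  by (intro Bochner_Integration.integrable_sum Bochner_Integration.integrable_mult_right integrable_ind_phi) auto

lemma K0_eq_integral: "K0 = (\<integral>s. ind s * mu s \<partial>Leb)"
  and d_eq_integral: "d j = sqrt (\<nu> j) * (\<integral>s. ind s * \<phi> j s \<partial>Leb)"
  and A_t_eq_integral: "A_t \<omega> = (\<integral>s. ind s * a s \<omega> \<partial>Leb)"
  unfolding K0_def d_def A_t_def by (simp_all add: LINT_eq_integral_Leb)

lemma K_a_eq: "K_a M a \<nu> \<phi> t0 N t y = K0 + (\<Sum>j\<in>{1..N}. d j * y j)"
proof -
  have "K_a M a \<nu> \<phi> t0 N t y = (\<integral>s. ind s * (mu s + (\<Sum>j\<in>{1..N}. sqrt (\<nu> j) * \<phi> j s * y j)) \<partial>Leb)"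
    unfolding K_a_def mu_def by (rule LINT_eq_integral_Leb)
  also have "\<dots> = (\<integral>s. ind s * mu s + (\<Sum>j\<in>{1..N}. (sqrt (\<nu> j) * y j) * (ind s * \<phi> j s)) \<partial>Leb)"
    by (intro Bochner_Integration.integral_cong) (auto simp: algebra_simps sum_distrib_left)
  also have "\<dots> = (\<integral>s. ind s * mu s \<partial>Leb) + (\<integral>s. (\<Sum>j\<in>{1..N}. (sqrt (\<nu> j) * y j) * (ind s * \<phi> j s)) \<partial>Leb)"
    by (rule Bochner_Integration.integral_add[OF integrable_ind_mu integrable_sum_ind_phi])
  also have "\<dots> = K0 + (\<Sum>j\<in>{1..N}. d j * y j)"
    unfolding K0_eq_integral d_eq_integral integral_sum_ind_phi by (simp add: ac_simps)
  finally show ?thesis .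
qed

lemma integrable_A_t: "integrable M A_t"
proof -
  have "integrable (Leb \<Otimes>\<^sub>M M) (\<lambda>(s,\<omega>). ind s * a s \<omega>)"
  proof (rule Bochner_Integration.integrable_bound[OF integrable_a])
    show "(\<lambda>(s,\<omega>). ind s * a s \<omega>) \<in> borel_measurable (Leb \<Otimes>\<^sub>M M)" by measurable
  qed (auto simp: ind_def abs_mult split: split_indicator)
  from LebM.integrable_snd[OF this] show ?thesis
    unfolding A_t_eq_integral[abs_def] by simp
qed

lemma A_t_measurable[measurable]: "A_t \<in> borel_measurable M"
  using integrable_A_t by auto

lemma integrable_xi: "j \<ge> 1 \<Longrightarrow> integrable M (\<xi> j)"
  by (rule square_integrable_imp_integrable) (auto intro: xi_square_integrable)

lemma integrable_KN: "integrable M (KN N)"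
  unfolding KN_def[abs_def]
  by (intro Bochner_Integration.integrable_add integrable_const Bochner_Integration.integrable_sum
      Bochner_Integration.integrable_mult_right integrable_xi) auto

lemma KN_measurable[measurable]: "KN N \<in> borel_measurable M"
  using integrable_KN by auto

lemma abs_KN_minus_A_t_le:
  assumes a: "integrable Leb (\<lambda>s. a s \<omega>)"
  shows "\<bar>KN N \<omega> - A_t \<omega>\<bar> \<le> (\<integral>s. \<bar>residual N s \<omega>\<bar> \<partial>Leb)"
proof -
  have ind_a: "integrable Leb (\<lambda>s. ind s * a s \<omega>)" by (rule integrable_ind_mult[OF a])
  have residual: "integrable Leb (\<lambda>s. residual N s \<omega>)"
    unfolding residual_def using a
    by (intro Bochner_Integration.integrable_diff Bochner_Integration.integrable_sum
        Bochner_Integration.integrable_mult_left Bochner_Integration.integrable_mult_right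
        integrable_mu integrable_phi_Leb) auto
  have "(\<integral>s. ind s * residual N s \<omega> \<partial>Leb) =
        (\<integral>s. ind s * a s \<omega> - ind s * mu s - (\<Sum>j\<in>{1..N}. (sqrt (\<nu> j) * \<xi> j \<omega>) * (ind s * \<phi> j s)) \<partial>Leb)"
    unfolding residual_def by (intro Bochner_Integration.integral_cong) (auto simp: algebra_simps sum_distrib_left)
  also have "\<dots> = (\<integral>s. ind s * a s \<omega> - ind s * mu s \<partial>Leb)
        - (\<integral>s. (\<Sum>j\<in>{1..N}. (sqrt (\<nu> j) * \<xi> j \<omega>) * (ind s * \<phi> j s)) \<partial>Leb)"
    by (rule Bochner_Integration.integral_diff[OF Bochner_Integration.integrable_diff[OF ind_a integrable_ind_mu]
          integrable_sum_ind_phi])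
  also have "\<dots> = A_t \<omega> - KN N \<omega>"
    unfolding A_t_eq_integral KN_def K0_eq_integral d_eq_integral integral_sum_ind_phi
      Bochner_Integration.integral_diff[OF ind_a integrable_ind_mu]
    by (simp add: ac_simps)
  finally have "\<bar>KN N \<omega> - A_t \<omega>\<bar> = \<bar>\<integral>s. ind s * residual N s \<omega> \<partial>Leb\<bar>" by simp
  also have "\<dots> \<le> (\<integral>s. \<bar>ind s * residual N s \<omega>\<bar> \<partial>Leb)" by (rule integral_abs_bound)
  also have "\<dots> \<le> (\<integral>s. \<bar>residual N s \<omega>\<bar> \<partial>Leb)"
    using integrable_abs[OF integrable_ind_mult[OF residual]] integrable_abs[OF residual]
    by (intro integral_mono) (auto simp: ind_def abs_mult split: split_indicator)
  finally show ?thesis .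
qed

lemma residual_measurable[measurable]: "(\<lambda>x. residual N (fst x) (snd x)) \<in> borel_measurable (Leb \<Otimes>\<^sub>M M)"
proof -
  have [measurable]: "(\<lambda>x. a (fst x) (snd x)) \<in> borel_measurable (Leb \<Otimes>\<^sub>M M)"
    using a_measurable by (simp add: split_beta')
  have [measurable]: "\<And>j. j \<in> {1..N} \<Longrightarrow> (\<lambda>x. \<phi> j (fst x)) \<in> borel_measurable (Leb \<Otimes>\<^sub>M M)"
    "\<And>j. j \<in> {1..N} \<Longrightarrow> (\<lambda>x. \<xi> j (snd x)) \<in> borel_measurable (Leb \<Otimes>\<^sub>M M)"
    by (auto intro: measurable_compose[OF measurable_fst] measurable_compose[OF measurable_snd])
  show ?thesis unfolding residual_def by measurable
qed

lemma residual_square_integrable: "integrable (Leb \<Otimes>\<^sub>M M) (\<lambda>x. (residual N (fst x) (snd x))\<^sup>2)"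
proof -
  let ?term = "\<lambda>j x. sqrt (\<nu> j) * \<phi> j (fst x) * \<xi> j (snd x)"
  have [measurable]: "(\<lambda>x. a (fst x) (snd x)) \<in> borel_measurable (Leb \<Otimes>\<^sub>M M)"
    using a_measurable by (simp add: split_beta')
  have term_measurable: "?term j \<in> borel_measurable (Leb \<Otimes>\<^sub>M M)" if "j \<in> {1..N}" for j
  proof -
    have [measurable]: "\<phi> j \<in> borel_measurable Leb" "\<xi> j \<in> borel_measurable M" using that by auto
    show ?thesis by measurable
  qed
  have term_square: "integrable (Leb \<Otimes>\<^sub>M M) (\<lambda>x. (?term j x)\<^sup>2)" if "j \<in> {1..N}" for j
  proof -
    have j: "1 \<le> j" using that by simp
    have "integrable (Leb \<Otimes>\<^sub>M M) (\<lambda>x. (sqrt (\<nu> j))\<^sup>2 * ((\<phi> j (fst x))\<^sup>2 * (\<xi> j (snd x))\<^sup>2))"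
      using LebM.integrable_mult_fst_snd[OF phi_square_integrable_Leb[OF j] xi_square_integrable[OF j]]
      by (rule Bochner_Integration.integrable_mult_right)
    then show ?thesis by (simp only: power_mult_distrib mult.assoc)
  qed
  have "integrable (Leb \<Otimes>\<^sub>M M) (\<lambda>x. (a (fst x) (snd x) - mu (fst x) - (\<Sum>j\<in>{1..N}. ?term j x))\<^sup>2)"
  proof (intro integrable_square_diff integrable_square_sum)
    show "integrable (Leb \<Otimes>\<^sub>M M) (\<lambda>x. (a (fst x) (snd x))\<^sup>2)"
      using a_square_integrable by (simp add: split_beta')
    show "integrable (Leb \<Otimes>\<^sub>M M) (\<lambda>x. (mu (fst x))\<^sup>2)"
      using LebM.integrable_mult_fst_snd[OF mu_square_integrable integrable_const[of "1::real"]] by simp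
  qed (use term_measurable term_square in \<open>auto intro!: borel_measurable_sum\<close>)
  then show ?thesis unfolding residual_def by simp
qed

lemma KN_L1_tendsto: "(\<lambda>N. \<integral>\<omega>. \<bar>KN N \<omega> - A_t \<omega>\<bar> \<partial>M) \<longlonglongrightarrow> 0"
proof (rule tendsto_sandwich[OF _ _ tendsto_const])
  show "(\<lambda>N. \<integral>x. \<bar>residual N (fst x) (snd x)\<bar> \<partial>(Leb \<Otimes>\<^sub>M M)) \<longlonglongrightarrow> 0"
    using residual_L2_tendsto
    by (intro LebxM.L1_tendsto_zero_of_L2_tendsto_zero residual_measurable residual_square_integrable)
      (simp add: split_beta')
  have "(\<integral>\<omega>. \<bar>KN N \<omega> - A_t \<omega>\<bar> \<partial>M) \<le> (\<integral>x. \<bar>residual N (fst x) (snd x)\<bar> \<partial>(Leb \<Otimes>\<^sub>M M))" for N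
  proof -
    have "integrable (Leb \<Otimes>\<^sub>M M) (\<lambda>x. \<bar>residual N (fst x) (snd x)\<bar>)"
      using LebxM.square_integrable_imp_integrable[OF residual_measurable residual_square_integrable]
      by (rule integrable_abs)
    then have residual_integrable: "integrable (Leb \<Otimes>\<^sub>M M) (\<lambda>(s, \<omega>). \<bar>residual N s \<omega>\<bar>)"
      by (simp add: split_beta')
    have "(\<integral>\<omega>. \<bar>KN N \<omega> - A_t \<omega>\<bar> \<partial>M) \<le> (\<integral>\<omega>. (\<integral>s. \<bar>residual N s \<omega>\<bar> \<partial>Leb) \<partial>M)"
    proof (rule integral_mono_AE)
      show "integrable M (\<lambda>\<omega>. \<bar>KN N \<omega> - A_t \<omega>\<bar>)"
        by (intro integrable_abs Bochner_Integration.integrable_diff integrable_KN integrable_A_t)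
      show "integrable M (\<lambda>\<omega>. \<integral>s. \<bar>residual N s \<omega>\<bar> \<partial>Leb)"
        using LebM.integrable_snd[OF residual_integrable] by simp
      show "AE \<omega> in M. \<bar>KN N \<omega> - A_t \<omega>\<bar> \<le> (\<integral>s. \<bar>residual N s \<omega>\<bar> \<partial>Leb)"
        using LebM.AE_integrable_snd[OF integrable_a] by eventually_elim (rule abs_KN_minus_A_t_le, simp)
    qed
    also have "\<dots> = (\<integral>x. \<bar>residual N (fst x) (snd x)\<bar> \<partial>(Leb \<Otimes>\<^sub>M M))"
      using LebM.integral_snd[OF residual_integrable] by (simp add: split_beta')
    finally show ?thesis .
  qed
  then show "eventually (\<lambda>N. (\<integral>\<omega>. \<bar>KN N \<omega> - A_t \<omega>\<bar> \<partial>M) \<le> (\<integral>x. \<bar>residual N (fst x) (snd x)\<bar> \<partial>(Leb \<Otimes>\<^sub>M M))) sequentially"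
    by simp
qed simp

end

context exp_KL_model
begin

definition "xi_tail N \<omega> = restrict (\<lambda>j. \<xi> j \<omega>) {2..N}"
definition "tail_space N = PiM {2..N} (\<lambda>_. lborel :: real measure)"
definition "K_tail N y = K0 + (\<Sum>j\<in>{2..N}. d j * y j)"
definition "fxi1_bound = (SOME B. \<forall>z. \<bar>fxi1 z\<bar> \<le> B)"
definition "law_x0 = distr M lborel x0"
definition "law_tail N = distr M (tail_space N) (xi_tail N)"

text \<open>Given \<open>x0 = z\<close> and \<open>V = v\<close>, the variable \<open>x0 * exp (c * \<xi> 1 + V)\<close> has density
  \<open>exp_affine_density fxi1 z c v\<close>; averaging over \<open>\<omega>\<close> yields its density whenever \<open>\<xi> 1\<close> is
  independent of \<open>(x0, V)\<close>.\<close>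
definition "mixture_density V w = (\<integral>\<omega>. exp_affine_density fxi1 (x0 \<omega>) c (V \<omega>) w \<partial>M)"
definition "f1 = mixture_density (\<lambda>\<omega>. A_t \<omega> - c * \<xi> 1 \<omega>)"
definition "X_t \<omega> = x0 \<omega> * exp (A_t \<omega>)"

lemma c_nonzero: "c \<noteq> 0"
  using H4[OF t] nu1 unfolding c_def d_def by simp

lemma fxi1_measurable[measurable]: "fxi1 \<in> borel_measurable borel"
  by (rule borel_measurable_continuous_onI[OF H3(1)])

lemma f0_measurable[measurable]: "f0 \<in> borel_measurable borel"
  using distributed_real_measurable[OF _ f0_dens] f0_nonneg by simp

lemma fxi1_le_bound: "fxi1 z \<le> fxi1_bound"
proof -
  have "\<exists>B. \<forall>z. \<bar>fxi1 z\<bar> \<le> B" using H3(2) unfolding bounded_iff by auto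
  then have "\<forall>z. \<bar>fxi1 z\<bar> \<le> fxi1_bound" unfolding fxi1_bound_def by (rule someI_ex)
  then show ?thesis by (meson abs_ge_self order.trans)
qed

lemma fxi1_bound_nonneg: "0 \<le> fxi1_bound"
  using fxi1_nonneg fxi1_le_bound order.trans by blast

lemma xi_tail_measurable[measurable]: "xi_tail N \<in> measurable M (tail_space N)"
  unfolding xi_tail_def[abs_def] tail_space_def by (intro measurable_restrict) auto

lemma K_tail_measurable[measurable]: "K_tail N \<in> borel_measurable (tail_space N)"
  unfolding K_tail_def[abs_def] tail_space_def by measurable

lemma KN_split: "N \<ge> 1 \<Longrightarrow> KN N \<omega> = c * \<xi> 1 \<omega> + K_tail N (xi_tail N \<omega>)"
proof -
  assume "N \<ge> 1"
  then have "{1..N} = insert 1 {2..N}" by auto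
  moreover have "(\<Sum>j\<in>{2..N}. d j * xi_tail N \<omega> j) = (\<Sum>j\<in>{2..N}. d j * \<xi> j \<omega>)"
    unfolding xi_tail_def by (intro sum.cong) auto
  ultimately show ?thesis unfolding KN_def K_tail_def c_def by simp
qed

lemma indep_tail: "N \<ge> 2 \<Longrightarrow> indep3 lborel x0 lborel (\<xi> 1) (tail_space N) (xi_tail N)"
  using H2_indep unfolding xi_tail_def[abs_def] tail_space_def by simp

lemma distr_x0: "distr M lborel x0 = density lborel f0"
  using distributed_distr_eq_density[OF f0_dens] by simp

lemma distr_xi1: "distr M lborel (\<xi> 1) = density lborel fxi1"
  using distributed_distr_eq_density[OF fxi1_dens] by simp

lemma AE_x0_nonzero: "AE \<omega> in M. x0 \<omega> \<noteq> 0"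
proof -
  have "AE z in distr M lborel x0. z \<noteq> 0"
    unfolding distr_x0 by (subst AE_density) (auto intro: AE_mp[OF AE_lborel_singleton[of 0]])
  then show ?thesis by (subst (asm) AE_distr_iff) auto
qed

lemma sets_law_x0[simp, measurable_cong]: "sets law_x0 = sets borel"
  unfolding law_x0_def by simp

lemma sets_law_tail[simp, measurable_cong]: "sets (law_tail N) = sets (tail_space N)"
  unfolding law_tail_def by simp

lemma measurable_law_x0_snd[measurable]: "snd \<in> measurable (A \<Otimes>\<^sub>M law_x0) borel"
  and measurable_law_tail_fst[measurable]: "fst \<in> measurable (law_tail N \<Otimes>\<^sub>M A) (tail_space N)"
  and measurable_law_tail_snd[measurable]: "snd \<in> measurable (A \<Otimes>\<^sub>M law_tail N) (tail_space N)"
  by (subst measurable_cong_sets[OF sets_pair_measure_cong[OF refl sets_law_x0] refl], simp,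
      subst measurable_cong_sets[OF sets_pair_measure_cong[OF sets_law_tail refl] refl], simp,
      subst measurable_cong_sets[OF sets_pair_measure_cong[OF refl sets_law_tail] refl], simp)

lemma conditional_density_nonneg: "0 \<le> exp_affine_density fxi1 z c v w"
  by (rule exp_affine_density_nonneg[OF fxi1_nonneg])

lemma conditional_density_le: "exp_affine_density fxi1 z c v w \<le> fxi1_bound / \<bar>c\<bar> / \<bar>w\<bar>"
  using exp_affine_density_le[OF fxi1_nonneg fxi1_le_bound] by simp

lemma integrable_conditional_density:
  assumes [measurable]: "V \<in> borel_measurable M"
  shows "integrable M (\<lambda>\<omega>. exp_affine_density fxi1 (x0 \<omega>) c (V \<omega>) w)"
  using conditional_density_nonneg conditional_density_le
  by (intro integrable_const_bound[where B="fxi1_bound / \<bar>c\<bar> / \<bar>w\<bar>"]) auto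

lemma mixture_density_nonneg: "0 \<le> mixture_density V w"
  unfolding mixture_density_def by (intro integral_nonneg_AE AE_I2 conditional_density_nonneg)

lemma mixture_density_le:
  assumes "V \<in> borel_measurable M"
  shows "mixture_density V w \<le> fxi1_bound / \<bar>c\<bar> / \<bar>w\<bar>"
proof -
  have "mixture_density V w \<le> (\<integral>\<omega>. fxi1_bound / \<bar>c\<bar> / \<bar>w\<bar> \<partial>M)"
    unfolding mixture_density_def using assms conditional_density_le
    by (intro integral_mono integrable_conditional_density) auto
  then show ?thesis by (simp add: prob_space)
qed

lemma borel_measurable_mixture_density[measurable]:
  assumes [measurable]: "V \<in> borel_measurable M"
  shows "mixture_density V \<in> borel_measurable borel"
  unfolding mixture_density_def[abs_def] by measurable

lemma nn_integral_eq_mixture_density: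
  assumes "V \<in> borel_measurable M"
  shows "(\<integral>\<^sup>+\<omega>. ennreal (exp_affine_density fxi1 (x0 \<omega>) c (V \<omega>) w) \<partial>M) = ennreal (mixture_density V w)"
  unfolding mixture_density_def using assms conditional_density_nonneg
  by (intro nn_integral_eq_integral integrable_conditional_density) auto

lemma mixture_density_tendsto:
  assumes [measurable]: "\<And>n. V n \<in> borel_measurable M" "V' \<in> borel_measurable M"
    and "\<And>n. integrable M (\<lambda>\<omega>. V n \<omega> - V' \<omega>)"
    and "(\<lambda>n. \<integral>\<omega>. \<bar>V n \<omega> - V' \<omega>\<bar> \<partial>M) \<longlonglongrightarrow> 0"
  shows "(\<lambda>n. mixture_density (V n) w) \<longlonglongrightarrow> mixture_density V' w"
  unfolding mixture_density_def
proof (rule integral_tendsto_of_L1_tendsto[where H="\<lambda>z v. exp_affine_density fxi1 z c v w"])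
  show "(\<lambda>(z, v). exp_affine_density fxi1 z c v w) \<in> borel_measurable (borel \<Otimes>\<^sub>M borel)"
    by measurable
  show "continuous_on UNIV (\<lambda>v. exp_affine_density fxi1 z c v w)" for z
    by (rule continuous_on_exp_affine_density[OF H3(1) c_nonzero])
  show "\<bar>exp_affine_density fxi1 z c v w\<bar> \<le> fxi1_bound / \<bar>c\<bar> / \<bar>w\<bar>" for z v
    using conditional_density_nonneg conditional_density_le by simp
qed (use assms in auto)

lemma mixture_density_tail_tendsto:
  "(\<lambda>n. mixture_density (\<lambda>\<omega>. K_tail (n + 2) (xi_tail (n + 2) \<omega>)) w) \<longlonglongrightarrow> f1 w"
proof -
  have tail: "K_tail (n + 2) (xi_tail (n + 2) \<omega>) - (A_t \<omega> - c * \<xi> 1 \<omega>) = KN (n + 2) \<omega> - A_t \<omega>" for n \<omega>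
    using KN_split[of "n + 2" \<omega>] by simp
  show ?thesis
    unfolding f1_def
  proof (rule mixture_density_tendsto)
    show "integrable M (\<lambda>\<omega>. K_tail (n + 2) (xi_tail (n + 2) \<omega>) - (A_t \<omega> - c * \<xi> 1 \<omega>))" for n
      unfolding tail by (intro Bochner_Integration.integrable_diff integrable_KN integrable_A_t)
    show "(\<lambda>n. \<integral>\<omega>. \<bar>K_tail (n + 2) (xi_tail (n + 2) \<omega>) - (A_t \<omega> - c * \<xi> 1 \<omega>)\<bar> \<partial>M) \<longlonglongrightarrow> 0"
      unfolding tail using LIMSEQ_ignore_initial_segment[OF KN_L1_tendsto, of 2] by simp
  qed measurable
qed

lemma nn_integral_laws_eq_mixture_density:
  assumes "N \<ge> 2"
  shows "(\<integral>\<^sup>+y'. \<integral>\<^sup>+z. ennreal (exp_affine_density fxi1 z c (K_tail N y') w) \<partial>law_x0 \<partial>law_tail N)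
       = ennreal (mixture_density (\<lambda>\<omega>. K_tail N (xi_tail N \<omega>)) w)"
  using indep3_nn_integral_13[OF indep_tail[OF assms],
      of "\<lambda>p. ennreal (exp_affine_density fxi1 (fst p) c (K_tail N (snd p)) w)"]
  unfolding law_x0_def law_tail_def by (simp add: nn_integral_eq_mixture_density)

lemma nn_integral_law_xi1_exp:
  fixes \<psi> :: "real \<Rightarrow> ennreal"
  assumes "z \<noteq> 0" and [measurable]: "\<psi> \<in> borel_measurable borel"
  shows "(\<integral>\<^sup>+u. \<psi> (z * exp (c * u + v)) \<partial>distr M lborel (\<xi> 1))
       = (\<integral>\<^sup>+w. \<psi> w * ennreal (exp_affine_density fxi1 z c v w) \<partial>lborel)"
proof -
  have "(\<integral>\<^sup>+u. \<psi> (z * exp (c * u + v)) \<partial>distr M lborel (\<xi> 1))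
      = (\<integral>\<^sup>+u. \<psi> (z * exp (c * u + v)) * ennreal (fxi1 u) \<partial>lborel)"
    unfolding distr_xi1 by (subst nn_integral_density) (auto simp: mult.commute)
  also have "\<dots> = (\<integral>\<^sup>+w. \<psi> w * ennreal (exp_affine_density fxi1 z c v w) \<partial>lborel)"
    using fxi1_nonneg assms(1) c_nonzero by (intro nn_integral_exp_affine_density) auto
  finally show ?thesis .
qed

lemma nn_integral_KN_density:
  fixes h :: "real \<Rightarrow> ennreal"
  assumes N: "N \<ge> 1" and [measurable]: "h \<in> borel_measurable borel"
  shows "(\<integral>\<^sup>+y. ennreal (fxi N y) * h (K0 + (\<Sum>j\<in>{1..N}. d j * y j)) \<partial>PiM {1..N} (\<lambda>_. lborel))
       = (\<integral>\<^sup>+\<omega>. h (KN N \<omega>) \<partial>M)"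
proof -
  let ?P = "PiM {1..N} (\<lambda>_. lborel) :: (nat \<Rightarrow> real) measure"
  have [measurable]: "fxi N \<in> borel_measurable ?P"
    using distributed_real_measurable[OF _ fxi_dens[OF N]] fxi_nonneg by simp
  have xi_vec[measurable]: "xi_vec \<xi> N \<in> measurable M ?P"
    using distributed_measurable[OF fxi_dens[OF N]] .
  have "(\<integral>\<^sup>+y. ennreal (fxi N y) * h (K0 + (\<Sum>j\<in>{1..N}. d j * y j)) \<partial>?P)
      = (\<integral>\<^sup>+y. h (K0 + (\<Sum>j\<in>{1..N}. d j * y j)) \<partial>distr M ?P (xi_vec \<xi> N))"
    unfolding distributed_distr_eq_density[OF fxi_dens[OF N]]
    by (rule nn_integral_density[symmetric]) measurable
  also have "\<dots> = (\<integral>\<^sup>+\<omega>. h (K0 + (\<Sum>j\<in>{1..N}. d j * xi_vec \<xi> N \<omega> j)) \<partial>M)"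
    by (rule nn_integral_distr[OF xi_vec]) measurable
  also have "\<dots> = (\<integral>\<^sup>+\<omega>. h (KN N \<omega>) \<partial>M)"
    unfolding KN_def xi_vec_def by (intro nn_integral_cong arg_cong[where f=h] sum.cong) auto
  finally show ?thesis .
qed

text \<open>Integrating out \<open>\<xi> 1\<close> in \<open>f1N\<close> with the swapped substitution turns the density of
  \<open>\<xi> 1\<close> into that of \<open>x0\<close>.\<close>
lemma nn_integral_f1N_integrand:
  assumes N: "N \<ge> 2" and x: "x \<noteq> 0"
  shows "(\<integral>\<^sup>+y. ennreal (f0 (x * exp (- K_a M a \<nu> \<phi> t0 N t y)) * fxi N y * exp (- K_a M a \<nu> \<phi> t0 N t y)) \<partial>PiM {1..N} (\<lambda>_. lborel))
       = ennreal (mixture_density (\<lambda>\<omega>. K_tail N (xi_tail N \<omega>)) x)"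
proof -
  define psi where "psi v = f0 (x * exp (- v)) * exp (- v)" for v
  have [measurable]: "psi \<in> borel_measurable borel" unfolding psi_def[abs_def] by measurable
  have "(\<integral>\<^sup>+y. ennreal (f0 (x * exp (- K_a M a \<nu> \<phi> t0 N t y)) * fxi N y * exp (- K_a M a \<nu> \<phi> t0 N t y)) \<partial>PiM {1..N} (\<lambda>_. lborel))
      = (\<integral>\<^sup>+y. ennreal (fxi N y) * ennreal (psi (K0 + (\<Sum>j\<in>{1..N}. d j * y j))) \<partial>PiM {1..N} (\<lambda>_. lborel))"
    by (intro nn_integral_cong) (simp add: K_a_eq psi_def ennreal_mult'[symmetric] fxi_nonneg ac_simps)
  also have "\<dots> = (\<integral>\<^sup>+\<omega>. ennreal (psi (KN N \<omega>)) \<partial>M)"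
    using N by (intro nn_integral_KN_density) auto
  also have "\<dots> = (\<integral>\<^sup>+\<omega>. ennreal (psi (c * \<xi> 1 \<omega> + K_tail N (xi_tail N \<omega>))) \<partial>M)"
    using N by (simp add: KN_split)
  also have "\<dots> = (\<integral>\<^sup>+y'. \<integral>\<^sup>+u. ennreal (psi (c * u + K_tail N y')) \<partial>distr M lborel (\<xi> 1) \<partial>law_tail N)"
    using indep3_nn_integral_23[OF indep_tail[OF N], of "\<lambda>p. ennreal (psi (c * fst p + K_tail N (snd p)))"]
    unfolding law_tail_def by simp
  also have "\<dots> = (\<integral>\<^sup>+y'. \<integral>\<^sup>+z. ennreal (exp_affine_density fxi1 z c (K_tail N y') x) \<partial>law_x0 \<partial>law_tail N)"
  proof (rule nn_integral_cong)
    fix y'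
    have "(\<integral>\<^sup>+u. ennreal (psi (c * u + K_tail N y')) \<partial>distr M lborel (\<xi> 1))
        = (\<integral>\<^sup>+u. ennreal (fxi1 u) * ennreal (psi (c * u + K_tail N y')) \<partial>lborel)"
      unfolding distr_xi1 by (subst nn_integral_density) auto
    also have "\<dots> = (\<integral>\<^sup>+z. ennreal (f0 z) * ennreal (exp_affine_density fxi1 z c (K_tail N y') x) \<partial>lborel)"
      unfolding psi_def using fxi1_nonneg f0_nonneg x c_nonzero
      by (intro nn_integral_exp_affine_density_swap) auto
    also have "\<dots> = (\<integral>\<^sup>+z. ennreal (exp_affine_density fxi1 z c (K_tail N y') x) \<partial>law_x0)"
      unfolding law_x0_def distr_x0 by (subst nn_integral_density) auto
    finally show "(\<integral>\<^sup>+u. ennreal (psi (c * u + K_tail N y')) \<partial>distr M lborel (\<xi> 1)) =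
        (\<integral>\<^sup>+z. ennreal (exp_affine_density fxi1 z c (K_tail N y') x) \<partial>law_x0)" .
  qed
  also have "\<dots> = ennreal (mixture_density (\<lambda>\<omega>. K_tail N (xi_tail N \<omega>)) x)"
    by (rule nn_integral_laws_eq_mixture_density[OF N])
  finally show ?thesis .
qed

lemma f1N_eq_mixture_density:
  assumes N: "N \<ge> 2" and x: "x \<noteq> 0"
  shows "f1N M a \<nu> \<phi> t0 f0 fxi N x t = mixture_density (\<lambda>\<omega>. K_tail N (xi_tail N \<omega>)) x"
proof -
  let ?P = "PiM {1..N} (\<lambda>_. lborel) :: (nat \<Rightarrow> real) measure"
  have [measurable]: "fxi N \<in> borel_measurable ?P"
    using distributed_real_measurable[OF _ fxi_dens] fxi_nonneg N by simp
  have [measurable]: "(\<lambda>y. K_a M a \<nu> \<phi> t0 N t y) \<in> borel_measurable ?P"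
    unfolding K_a_eq by measurable
  have "f1N M a \<nu> \<phi> t0 f0 fxi N x t =
    enn2real (\<integral>\<^sup>+y. ennreal (f0 (x * exp (- K_a M a \<nu> \<phi> t0 N t y)) * fxi N y * exp (- K_a M a \<nu> \<phi> t0 N t y)) \<partial>?P)"
    unfolding f1N_def by (rule integral_eq_nn_integral, measurable) (auto simp: f0_nonneg fxi_nonneg)
  then show ?thesis
    unfolding nn_integral_f1N_integrand[OF N x] by (simp add: mixture_density_nonneg)
qed

lemma f1N_tendsto:
  assumes x: "x \<noteq> 0"
  shows "(\<lambda>N. f1N M a \<nu> \<phi> t0 f0 fxi N x t) \<longlonglongrightarrow> f1 x"
proof (rule LIMSEQ_offset[where k=2])
  have "f1N M a \<nu> \<phi> t0 f0 fxi (n + 2) x t = mixture_density (\<lambda>\<omega>. K_tail (n + 2) (xi_tail (n + 2) \<omega>)) x" for n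
    using x by (intro f1N_eq_mixture_density) auto
  with mixture_density_tail_tendsto show "(\<lambda>n. f1N M a \<nu> \<phi> t0 f0 fxi (n + 2) x t) \<longlonglongrightarrow> f1 x"
    by presburger
qed

end

context exp_KL_model
begin

text \<open>Fubini moves the \<open>x0\<close>- and tail-integrals inside the \<open>w\<close>-integral produced by
  the substitution for \<open>\<xi> 1\<close>.\<close>
lemma nn_integral_x0_exp_KN:
  fixes \<psi> :: "real \<Rightarrow> ennreal"
  assumes N: "N \<ge> 2" and [measurable]: "\<psi> \<in> borel_measurable borel"
  shows "(\<integral>\<^sup>+\<omega>. \<psi> (x0 \<omega> * exp (KN N \<omega>)) \<partial>M)
       = (\<integral>\<^sup>+w. \<psi> w * ennreal (mixture_density (\<lambda>\<omega>. K_tail N (xi_tail N \<omega>)) w) \<partial>lborel)"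
proof -
  let ?dens = "\<lambda>z y' w. \<psi> w * ennreal (exp_affine_density fxi1 z c (K_tail N y') w)"
  interpret X0: prob_space law_x0 unfolding law_x0_def by (rule prob_space_distr) simp
  interpret Tail: prob_space "law_tail N" unfolding law_tail_def by (rule prob_space_distr) simp
  interpret Leb_Tail: pair_sigma_finite lborel "law_tail N" ..
  interpret Leb_X0: pair_sigma_finite lborel law_x0 ..
  interpret Tail_X0: pair_sigma_finite "law_tail N" law_x0 ..
  have [simp]: "space law_x0 = UNIV" "space (law_tail N) = space (tail_space N)"
    unfolding law_x0_def law_tail_def by auto
  have "(\<integral>\<^sup>+\<omega>. \<psi> (x0 \<omega> * exp (KN N \<omega>)) \<partial>M)
      = (\<integral>\<^sup>+z. \<integral>\<^sup>+y'. \<integral>\<^sup>+u. \<psi> (z * exp (c * u + K_tail N y')) \<partial>distr M lborel (\<xi> 1) \<partial>law_tail N \<partial>law_x0)"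
    using N KN_split indep3_nn_integral[OF indep_tail[OF N],
        of "\<lambda>p. \<psi> (fst p * exp (c * fst (snd p) + K_tail N (snd (snd p))))"]
    unfolding law_x0_def law_tail_def by simp
  also have "\<dots> = (\<integral>\<^sup>+z. \<integral>\<^sup>+y'. \<integral>\<^sup>+w. ?dens z y' w \<partial>lborel \<partial>law_tail N \<partial>law_x0)"
  proof (rule nn_integral_cong_AE)
    have "AE z in law_x0. z \<noteq> 0"
      using AE_x0_nonzero unfolding law_x0_def by (simp add: AE_distr_iff)
    then show "AE z in law_x0. (\<integral>\<^sup>+y'. \<integral>\<^sup>+u. \<psi> (z * exp (c * u + K_tail N y')) \<partial>distr M lborel (\<xi> 1) \<partial>law_tail N)
        = (\<integral>\<^sup>+y'. \<integral>\<^sup>+w. ?dens z y' w \<partial>lborel \<partial>law_tail N)"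
      by eventually_elim (rule nn_integral_cong, rule nn_integral_law_xi1_exp, simp_all)
  qed
  also have "\<dots> = (\<integral>\<^sup>+z. \<integral>\<^sup>+w. \<integral>\<^sup>+y'. ?dens z y' w \<partial>law_tail N \<partial>lborel \<partial>law_x0)"
    by (intro nn_integral_cong Leb_Tail.Fubini') measurable
  also have "\<dots> = (\<integral>\<^sup>+w. \<integral>\<^sup>+z. \<integral>\<^sup>+y'. ?dens z y' w \<partial>law_tail N \<partial>law_x0 \<partial>lborel)"
    by (rule Leb_X0.Fubini') measurable
  also have "\<dots> = (\<integral>\<^sup>+w. \<integral>\<^sup>+y'. \<integral>\<^sup>+z. ?dens z y' w \<partial>law_x0 \<partial>law_tail N \<partial>lborel)"
    by (intro nn_integral_cong Tail_X0.Fubini') measurable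
  also have "\<dots> = (\<integral>\<^sup>+w. \<psi> w * ennreal (mixture_density (\<lambda>\<omega>. K_tail N (xi_tail N \<omega>)) w) \<partial>lborel)"
    by (intro nn_integral_cong)
      (simp add: nn_integral_cmult X0.borel_measurable_nn_integral nn_integral_laws_eq_mixture_density[OF N])
  finally show ?thesis .
qed

lemma X_t_measurable[measurable]: "X_t \<in> borel_measurable M"
  unfolding X_t_def[abs_def] by measurable

lemma f1_nonneg: "0 \<le> f1 w"
  unfolding f1_def by (rule mixture_density_nonneg)

lemma f1_measurable[measurable]: "f1 \<in> borel_measurable borel"
  unfolding f1_def by measurable

lemma cutoff_mult_mixture_density_le:
  assumes "V \<in> borel_measurable M"
  shows "cutoff b n w * mixture_density V w
    \<le> indicator {- real (Suc n)..real (Suc n)} w * (fxi1_bound / \<bar>c\<bar> * real (Suc n))"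
  using assms fxi1_bound_nonneg
  by (intro cutoff_mult_le mixture_density_nonneg mixture_density_le) auto

lemma integral_cutoff_X_t: "(\<integral>\<omega>. cutoff b n (X_t \<omega>) \<partial>M) = (\<integral>w. cutoff b n w * f1 w \<partial>lborel)"
proof -
  define E where "E N = (\<integral>\<omega>. cutoff b n (x0 \<omega> * exp (KN N \<omega>)) \<partial>M)" for N
  define g where "g N = mixture_density (\<lambda>\<omega>. K_tail N (xi_tail N \<omega>))" for N
  have lim_E: "E \<longlonglongrightarrow> (\<integral>\<omega>. cutoff b n (X_t \<omega>) \<partial>M)"
    unfolding E_def X_t_def
  proof (rule integral_tendsto_of_L1_tendsto[where H="\<lambda>z k. cutoff b n (z * exp k)" and B=1 and N=borel])
    show "(\<lambda>(z, k). cutoff b n (z * exp k)) \<in> borel_measurable (borel \<Otimes>\<^sub>M borel)"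
      by measurable
    show "continuous_on UNIV (\<lambda>k. cutoff b n (z * exp k))" for z
      by (intro continuous_on_compose2[OF continuous_on_cutoff] continuous_intros) auto
  qed (use KN_L1_tendsto integrable_KN integrable_A_t cutoff_nonneg cutoff_le_one in auto)
  have E_eq: "E N = (\<integral>w. cutoff b n w * g N w \<partial>lborel)" if N: "N \<ge> 2" for N
  proof -
    have "E N = enn2real (\<integral>\<^sup>+\<omega>. ennreal (cutoff b n (x0 \<omega> * exp (KN N \<omega>))) \<partial>M)"
      unfolding E_def by (rule integral_eq_nn_integral) (auto simp: cutoff_nonneg)
    also have "(\<integral>\<^sup>+\<omega>. ennreal (cutoff b n (x0 \<omega> * exp (KN N \<omega>))) \<partial>M)
        = (\<integral>\<^sup>+w. ennreal (cutoff b n w) * ennreal (g N w) \<partial>lborel)"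
      unfolding g_def by (rule nn_integral_x0_exp_KN[OF N]) measurable
    also have "\<dots> = (\<integral>\<^sup>+w. ennreal (cutoff b n w * g N w) \<partial>lborel)"
      by (simp add: ennreal_mult cutoff_nonneg g_def mixture_density_nonneg)
    also have "enn2real \<dots> = (\<integral>w. cutoff b n w * g N w \<partial>lborel)"
      unfolding g_def by (rule integral_eq_nn_integral[symmetric]) (auto simp: cutoff_nonneg mixture_density_nonneg)
    finally show ?thesis .
  qed
  have "(\<lambda>N. \<integral>w. cutoff b n w * g (N + 2) w \<partial>lborel) \<longlonglongrightarrow> (\<integral>w. cutoff b n w * f1 w \<partial>lborel)"
  proof (rule integral_dominated_convergence)
    show "integrable lborel (\<lambda>w. indicator {- real (Suc n)..real (Suc n)} w * (fxi1_bound / \<bar>c\<bar> * real (Suc n)))"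
      by (intro integrable_mult_left) (simp add: integrable_indicator_iff)
    show "AE w in lborel. norm (cutoff b n w * g (N + 2) w) \<le> indicator {- real (Suc n)..real (Suc n)} w * (fxi1_bound / \<bar>c\<bar> * real (Suc n))" for N
      unfolding g_def using cutoff_mult_mixture_density_le[of "\<lambda>\<omega>. K_tail (N + 2) (xi_tail (N + 2) \<omega>)" b n]
      by (intro AE_I2) (simp add: abs_of_nonneg cutoff_nonneg mixture_density_nonneg)
    show "AE w in lborel. (\<lambda>N. cutoff b n w * g (N + 2) w) \<longlonglongrightarrow> cutoff b n w * f1 w"
      unfolding g_def by (intro AE_I2 tendsto_mult tendsto_const mixture_density_tail_tendsto)
  qed (auto simp: g_def)
  with E_eq have "(\<lambda>N. E (N + 2)) \<longlonglongrightarrow> (\<integral>w. cutoff b n w * f1 w \<partial>lborel)"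
    by simp
  with LIMSEQ_ignore_initial_segment[OF lim_E, of 2] show ?thesis
    by (rule LIMSEQ_unique)
qed

lemma distributed_X_t: "distributed M lborel X_t (\<lambda>w. ennreal (f1 w))"
proof (rule distributed_if_cutoff_integrals)
  show "AE \<omega> in M. X_t \<omega> \<noteq> 0"
    using AE_x0_nonzero by eventually_elim (simp add: X_t_def)
  fix b n
  have "integrable lborel (\<lambda>w. cutoff b n w * f1 w)"
  proof (rule Bochner_Integration.integrable_bound)
    show "integrable lborel (\<lambda>w. indicator {- real (Suc n)..real (Suc n)} w * (fxi1_bound / \<bar>c\<bar> * real (Suc n)))"
      by (intro integrable_mult_left) (simp add: integrable_indicator_iff)
    show "AE w in lborel. norm (cutoff b n w * f1 w) \<le> norm (indicator {- real (Suc n)..real (Suc n)} w * (fxi1_bound / \<bar>c\<bar> * real (Suc n)))"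
      using cutoff_mult_mixture_density_le[of "\<lambda>\<omega>. A_t \<omega> - c * \<xi> 1 \<omega>" b n] fxi1_bound_nonneg
      by (intro AE_I2) (simp add: f1_def abs_of_nonneg cutoff_nonneg mixture_density_nonneg)
  qed measurable
  then show "(\<integral>\<^sup>+\<omega>. ennreal (cutoff b n (X_t \<omega>)) \<partial>M) = (\<integral>\<^sup>+w. ennreal (cutoff b n w * f1 w) \<partial>lborel)"
    using integral_cutoff_X_t[of b n] cutoff_nonneg cutoff_le_one f1_nonneg
    by (simp add: nn_integral_eq_integral integrable_const_bound[where B=1])
qed (use f1_nonneg in auto)

end

theorem theorem10:
  fixes M :: "'a measure" and t0 T :: real
    and x0 :: "'a \<Rightarrow> real" and a :: "real \<Rightarrow> 'a \<Rightarrow> real"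
    and \<nu> :: "nat \<Rightarrow> real" and \<phi> :: "nat \<Rightarrow> real \<Rightarrow> real" and \<xi> :: "nat \<Rightarrow> 'a \<Rightarrow> real"
    and f0 :: "real \<Rightarrow> real" and fxi1 :: "real \<Rightarrow> real"
    and fxi :: "nat \<Rightarrow> (nat \<Rightarrow> real) \<Rightarrow> real"
  assumes P: "prob_space M" and complete: "complete_measure M"
    and tT: "t0 < T"
    and KL: "KL_expansion M t0 T a \<nu> \<phi> \<xi>" and nu1: "\<nu> 1 > 0"
    \<comment> \<open>(H1)\<close>
    and H1: "L2_process M t0 T a"
    \<comment> \<open>(H2): x0, xi_1 and (xi_2,...,xi_N) absolutely continuous and independent, N >= 2\<close>
    and f0_nonneg: "\<And>z. 0 \<le> f0 z"
    and f0_dens: "distributed M lborel x0 (\<lambda>z. ennreal (f0 z))"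
    and fxi1_nonneg: "\<And>z. 0 \<le> fxi1 z"
    and fxi1_dens: "distributed M lborel (\<xi> 1) (\<lambda>z. ennreal (fxi1 z))"
    and H2_ac: "\<And>N. N \<ge> 2 \<Longrightarrow> \<exists>g. distributed M (PiM {2..N} (\<lambda>_. lborel))
                    (\<lambda>\<omega>. restrict (\<lambda>j. \<xi> j \<omega>) {2..N}) g"
    and H2_indep: "\<And>N. N \<ge> 2 \<Longrightarrow> prob_space.indep3 M lborel x0 lborel (\<xi> 1)
                    (PiM {2..N} (\<lambda>_. lborel)) (\<lambda>\<omega>. restrict (\<lambda>j. \<xi> j \<omega>) {2..N})"
    \<comment> \<open>(H3)\<close>
    and H3: "continuous_on UNIV fxi1" "bounded (range fxi1)"
    \<comment> \<open>(H4)\<close>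
    and H4: "\<And>t. t \<in> {t0<..T} \<Longrightarrow> (LINT s:{t0..t}|lborel. \<phi> 1 s) \<noteq> 0"
    \<comment> \<open>(H5)\<close>
    and H5: "(AE \<omega> in M. x0 \<omega> > 0) \<or> (AE \<omega> in M. x0 \<omega> < 0)"
    \<comment> \<open>f_{xi_N}: a density of xi_N = (xi_1,...,xi_N)\<close>
    and fxi_nonneg: "\<And>N y. 0 \<le> fxi N y"
    and fxi_dens: "\<And>N. N \<ge> 1 \<Longrightarrow> distributed M (PiM {1..N} (\<lambda>_. lborel)) (xi_vec \<xi> N)
                          (\<lambda>y. ennreal (fxi N y))"
    and t: "t \<in> {t0<..T}"
  shows "\<exists>f1 :: real \<Rightarrow> real. (\<forall>z. 0 \<le> f1 z) \<and>
           distributed M lborel (\<lambda>\<omega>. x0 \<omega> * exp (LINT s:{t0..t}|lborel. a s \<omega>)) (\<lambda>z. ennreal (f1 z)) \<and>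
           (\<forall>x. x \<noteq> 0 \<longrightarrow> (\<lambda>N. f1N M a \<nu> \<phi> t0 f0 fxi N x t) \<longlonglongrightarrow> f1 x)"
proof -
  interpret model: exp_KL_model M t0 T x0 a \<nu> \<phi> \<xi> f0 fxi1 fxi t
    unfolding exp_KL_model_def
    using P tT KL nu1 H1 f0_nonneg f0_dens fxi1_nonneg fxi1_dens H2_indep H3 H4 fxi_nonneg fxi_dens t
    by blast
  have "model.X_t = (\<lambda>\<omega>. x0 \<omega> * exp (LINT s:{t0..t}|lborel. a s \<omega>))"
    by (simp add: fun_eq_iff model.X_t_def model.A_t_def)
  then show ?thesis
    using model.f1_nonneg model.distributed_X_t model.f1N_tendsto by auto
qed

end
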